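(* Let $\mathcal V$ be a variety, $A\in\mathcal V$ and $\alpha,\beta\in\operatorname{Con}A$. \begin{enumerate} \item If $\mathcal V$ has a difference term, then for all $a,b,d\in A$ with $(a,b),(a,d)\in\alpha$: if $\big((a,b),(a,d)\big)\in\Delta_{\alpha\beta}$ then $(b,d)\in[\alpha,\beta]$. \item If $\mathcal V$ has a weak-difference term and $\alpha$ is abelian, then for all $b,d\in A$: there exists $a\in A$ with $(a,b),(a,d)\in\alpha$ and $\big((a,b),(a,d)\big)\in\Delta_{\alpha\beta}$ if and only if $(b,d)\in[\beta,\alpha]$. \item If $\mathcal V$ has a weak-difference term and $\alpha$ is abelian, then $\Delta_{\alpha\alpha}=\Delta_{\alpha\gamma}\wedge\hat\alpha$ for every $\gamma\in\operatorname{Con}A$ with $\alpha\le\gamma\le(0:\alpha)$. \item If $\mathcal V$ has a difference term $m$ and $\alpha$ is abelian, then for all $(a,b),(c,d)\in\alpha$ the following are equivalent: (a) $\big((a,b),(c,d)\big)\in\Delta_{\alpha\beta}$; (b) $\big((a,b),(c,m(b,a,c))\big)\in\Delta_{\alpha\beta}$ and $(d,m(b,a,c))\in[\alpha,\beta]$; (c) $(c,a)\in\beta$, $(a,b)\in\alpha$, and $(d,m(b,a,c))\in[\alpha,\beta]$. \end{enumerate}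
   Context: All algebras are in the sense of universal algebra. For an algebra $A$ and $\alpha,\beta\in\operatorname{Con}A$, $[\alpha,\beta]$ denotes the term-condition (TC) commutator; $0$ denotes the equality relation and $1$ the total relation. A congruence $\alpha$ is abelian if $[\alpha,\alpha]=0$. $A(\alpha)=\{(x,y)\in A\times A:(x,y)\in\alpha\}$ is the congruence $\alpha$ viewed as a subalgebra of $A\times A$. $\Delta_{\alpha\beta}$ is the congruence of $A(\alpha)$ generated by $\{((u,u),(v,v)):(u,v)\in\beta\}$. $\hat\alpha$ is the equivalence relation on $A(\alpha)$ given by $(x,y)\mathrel{\hat\alpha}(u,v)$ iff $x,y,u,v$ all lie in one $\alpha$-class. $(0:\alpha)$ denotes the centralizer of $\alpha$, the largest congruence $\gamma$ with $[\gamma,\alpha]=0$. A variety $\mathcal V$ has a difference term if there is a ternary term $d$ such that for every $A\in\mathcal V$, $\theta\in\operatorname{Con}A$ and $(a,b)\in\theta$: $d(a,a,b)=b$ and $(d(a,b,b),a)\in[\theta,\theta]$. It has a weak-difference term if there is a ternary term $d$ such that for all such $A,\theta,(a,b)$: $(d(a,a,b),b)\in[\theta,\theta]$ and $(b,d(b,a,a))\in[\theta,\theta]$. *)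

theory Defs
  imports Main
begin

text \<open>An algebra has a carrier and an interpretation of each operation symbol as a
  function on lists (only lists of the right length matter).\<close>

record ('a, 'f) alg =
  car :: "'a set"
  opr :: "'f \<Rightarrow> 'a list \<Rightarrow> 'a"

datatype ('f, 'v) trm = Var 'v | App 'f "('f, 'v) trm list"

fun eval :: "('a, 'f, 'm) alg_scheme \<Rightarrow> ('v \<Rightarrow> 'a) \<Rightarrow> ('f, 'v) trm \<Rightarrow> 'a" where
  "eval A \<rho> (Var x) = \<rho> x"
| "eval A \<rho> (App f ts) = opr A f (map (eval A \<rho>) ts)"

fun wf_trm :: "('f \<Rightarrow> nat) \<Rightarrow> ('f, 'v) trm \<Rightarrow> bool" where
  "wf_trm ar (Var x) = True"
| "wf_trm ar (App f ts) = (length ts = ar f \<and> (\<forall>t\<in>set ts. wf_trm ar t))"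

fun vars_trm :: "('f, 'v) trm \<Rightarrow> 'v set" where
  "vars_trm (Var x) = {x}"
| "vars_trm (App f ts) = \<Union> (vars_trm ` set ts)"

definition algebra :: "('f \<Rightarrow> nat) \<Rightarrow> ('a, 'f) alg \<Rightarrow> bool" where
  "algebra ar A \<longleftrightarrow> car A \<noteq> {} \<and>
     (\<forall>f xs. length xs = ar f \<and> set xs \<subseteq> car A \<longrightarrow> opr A f xs \<in> car A)"

text \<open>Identities are pairs of terms over variables nat. A variety is given (by
  Birkhoff's theorem) as the class of models of a set of identities.\<close>

definition wf_identities :: "('f \<Rightarrow> nat) \<Rightarrow> (('f, nat) trm \<times> ('f, nat) trm) set \<Rightarrow> bool" where
  "wf_identities ar \<Sigma> \<longleftrightarrow> (\<forall>(s, t)\<in>\<Sigma>. wf_trm ar s \<and> wf_trm ar t)"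

definition models :: "('f \<Rightarrow> nat) \<Rightarrow> (('f, nat) trm \<times> ('f, nat) trm) set \<Rightarrow> ('a, 'f) alg \<Rightarrow> bool" where
  "models ar \<Sigma> A \<longleftrightarrow> algebra ar A \<and>
     (\<forall>(s, t)\<in>\<Sigma>. \<forall>\<rho>. (\<forall>i. \<rho> i \<in> car A) \<longrightarrow> eval A \<rho> s = eval A \<rho> t)"

definition congruence :: "('f \<Rightarrow> nat) \<Rightarrow> ('a, 'f) alg \<Rightarrow> ('a \<times> 'a) set \<Rightarrow> bool" where
  "congruence ar A \<theta> \<longleftrightarrow> equiv (car A) \<theta> \<and>
     (\<forall>f xs ys. length xs = ar f \<and> list_all2 (\<lambda>x y. (x, y) \<in> \<theta>) xs ys
        \<longrightarrow> (opr A f xs, opr A f ys) \<in> \<theta>)"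

definition Cg :: "('f \<Rightarrow> nat) \<Rightarrow> ('a, 'f) alg \<Rightarrow> ('a \<times> 'a) set \<Rightarrow> ('a \<times> 'a) set" where
  "Cg ar A R = \<Inter> {\<theta>. congruence ar A \<theta> \<and> R \<subseteq> \<theta>}"

text \<open>For every term
  t(x, y) (x-variables Inl i, y-variables Inr j), all tuples a alpha b and
  c beta d: t(a,c) delta t(a,d) implies t(b,c) delta t(b,d).\<close>
definition centralizes ::
  "('f \<Rightarrow> nat) \<Rightarrow> ('a, 'f) alg \<Rightarrow> ('a \<times> 'a) set \<Rightarrow> ('a \<times> 'a) set \<Rightarrow> ('a \<times> 'a) set \<Rightarrow> bool" where
  "centralizes ar A \<alpha> \<beta> \<delta> \<longleftrightarrow>
     (\<forall>t :: ('f, nat + nat) trm. wf_trm ar t \<longrightarrow>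
       (\<forall>a b c d. (\<forall>i. (a i, b i) \<in> \<alpha>) \<and> (\<forall>j. (c j, d j) \<in> \<beta>) \<longrightarrow>
          (eval A (case_sum a c) t, eval A (case_sum a d) t) \<in> \<delta> \<longrightarrow>
          (eval A (case_sum b c) t, eval A (case_sum b d) t) \<in> \<delta>))"

definition comm :: "('f \<Rightarrow> nat) \<Rightarrow> ('a, 'f) alg \<Rightarrow> ('a \<times> 'a) set \<Rightarrow> ('a \<times> 'a) set \<Rightarrow> ('a \<times> 'a) set" where
  "comm ar A \<alpha> \<beta> = \<Inter> {\<delta>. congruence ar A \<delta> \<and> centralizes ar A \<alpha> \<beta> \<delta>}"

definition abelian :: "('f \<Rightarrow> nat) \<Rightarrow> ('a, 'f) alg \<Rightarrow> ('a \<times> 'a) set \<Rightarrow> bool" where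
  "abelian ar A \<alpha> \<longleftrightarrow> comm ar A \<alpha> \<alpha> = Id_on (car A)"

definition centralizer :: "('f \<Rightarrow> nat) \<Rightarrow> ('a, 'f) alg \<Rightarrow> ('a \<times> 'a) set \<Rightarrow> ('a \<times> 'a) set" where
  "centralizer ar A \<alpha> =
     (GREATEST \<gamma>. congruence ar A \<gamma> \<and> comm ar A \<gamma> \<alpha> = Id_on (car A))"

definition cong_alg :: "('a, 'f) alg \<Rightarrow> ('a \<times> 'a) set \<Rightarrow> ('a \<times> 'a, 'f) alg" where
  "cong_alg A \<alpha> = \<lparr> car = \<alpha>,
      opr = (\<lambda>f ps. (opr A f (map fst ps), opr A f (map snd ps))) \<rparr>"

definition Delta ::
  "('f \<Rightarrow> nat) \<Rightarrow> ('a, 'f) alg \<Rightarrow> ('a \<times> 'a) set \<Rightarrow> ('a \<times> 'a) set \<Rightarrow> (('a \<times> 'a) \<times> ('a \<times> 'a)) set" where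
  "Delta ar A \<alpha> \<beta> = Cg ar (cong_alg A \<alpha>) {((u, u), (v, v)) | u v. (u, v) \<in> \<beta>}"

definition alpha_hat :: "('a \<times> 'a) set \<Rightarrow> (('a \<times> 'a) \<times> ('a \<times> 'a)) set" where
  "alpha_hat \<alpha> = {((x, y), (u, v)). (x, y) \<in> \<alpha> \<and> (u, v) \<in> \<alpha> \<and>
       (\<forall>p\<in>{x, y, u, v}. \<forall>q\<in>{x, y, u, v}. (p, q) \<in> \<alpha>)}"

definition apply3 :: "('a, 'f) alg \<Rightarrow> ('f, nat) trm \<Rightarrow> 'a \<Rightarrow> 'a \<Rightarrow> 'a \<Rightarrow> 'a" where
  "apply3 A d x y z = eval A (\<lambda>i. if i = 0 then x else if i = 1 then y else z) d"

definition diff_term_at ::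
  "'u itself \<Rightarrow> ('f \<Rightarrow> nat) \<Rightarrow> (('f, nat) trm \<times> ('f, nat) trm) set \<Rightarrow> ('f, nat) trm \<Rightarrow> bool" where
  "diff_term_at _ ar \<Sigma> d \<longleftrightarrow>
     (\<forall>B :: ('u, 'f) alg. models ar \<Sigma> B \<longrightarrow>
       (\<forall>\<theta>. congruence ar B \<theta> \<longrightarrow>
         (\<forall>a b. (a, b) \<in> \<theta> \<longrightarrow>
            apply3 B d a a b = b \<and> (apply3 B d a b b, a) \<in> comm ar B \<theta> \<theta>)))"

definition weak_diff_term_at ::
  "'u itself \<Rightarrow> ('f \<Rightarrow> nat) \<Rightarrow> (('f, nat) trm \<times> ('f, nat) trm) set \<Rightarrow> ('f, nat) trm \<Rightarrow> bool" where
  "weak_diff_term_at _ ar \<Sigma> d \<longleftrightarrow>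
     (\<forall>B :: ('u, 'f) alg. models ar \<Sigma> B \<longrightarrow>
       (\<forall>\<theta>. congruence ar B \<theta> \<longrightarrow>
         (\<forall>a b. (a, b) \<in> \<theta> \<longrightarrow>
            (apply3 B d a a b, b) \<in> comm ar B \<theta> \<theta> \<and>
            (b, apply3 B d b a a) \<in> comm ar B \<theta> \<theta>)))"

text \<open>"d is a (weak) difference term of the variety Mod(Sigma)", where the
  quantification over all algebras of the variety is restricted (HOL typing) to
  algebras whose carriers live in types built from 'a.\<close>
definition is_diff_term ::
  "'a itself \<Rightarrow> ('f \<Rightarrow> nat) \<Rightarrow> (('f, nat) trm \<times> ('f, nat) trm) set \<Rightarrow> ('f, nat) trm \<Rightarrow> bool" where
  "is_diff_term _ ar \<Sigma> d \<longleftrightarrow> wf_trm ar d \<and> vars_trm d \<subseteq> {0, 1, 2} \<and>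
     diff_term_at TYPE('a) ar \<Sigma> d \<and>
     diff_term_at TYPE('a \<times> 'a) ar \<Sigma> d \<and>
     diff_term_at TYPE(('a \<times> 'a) \<times> ('a \<times> 'a)) ar \<Sigma> d \<and>
     diff_term_at TYPE('a set) ar \<Sigma> d \<and>
     diff_term_at TYPE(('a \<times> 'a) set) ar \<Sigma> d \<and>
     diff_term_at TYPE('a set set set) ar \<Sigma> d"

definition is_weak_diff_term ::
  "'a itself \<Rightarrow> ('f \<Rightarrow> nat) \<Rightarrow> (('f, nat) trm \<times> ('f, nat) trm) set \<Rightarrow> ('f, nat) trm \<Rightarrow> bool" where
  "is_weak_diff_term _ ar \<Sigma> d \<longleftrightarrow> wf_trm ar d \<and> vars_trm d \<subseteq> {0, 1, 2} \<and>
     weak_diff_term_at TYPE('a) ar \<Sigma> d \<and>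
     weak_diff_term_at TYPE('a \<times> 'a) ar \<Sigma> d \<and>
     weak_diff_term_at TYPE(('a \<times> 'a) \<times> ('a \<times> 'a)) ar \<Sigma> d \<and>
     weak_diff_term_at TYPE('a set) ar \<Sigma> d \<and>
     weak_diff_term_at TYPE(('a \<times> 'a) set) ar \<Sigma> d \<and>
     weak_diff_term_at TYPE('a set set set) ar \<Sigma> d"

definition has_diff_term :: "'a itself \<Rightarrow> ('f \<Rightarrow> nat) \<Rightarrow> (('f, nat) trm \<times> ('f, nat) trm) set \<Rightarrow> bool" where
  "has_diff_term T ar \<Sigma> \<longleftrightarrow> (\<exists>d. is_diff_term T ar \<Sigma> d)"

definition has_weak_diff_term :: "'a itself \<Rightarrow> ('f \<Rightarrow> nat) \<Rightarrow> (('f, nat) trm \<times> ('f, nat) trm) set \<Rightarrow> bool" where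
  "has_weak_diff_term T ar \<Sigma> \<longleftrightarrow> (\<exists>d. is_weak_diff_term T ar \<Sigma> d)"

end

theory Submission
  imports Defs
begin

(* Everything rests on two estimates for Delta(alpha, beta).
  From above: Delta is contained in every equivalence relation on A(alpha) that relates the images of
  each generator ((u, u), (v, v)) under every unary polynomial of A(alpha).  Read on unary polynomials,
  the centrality conditions C(alpha, beta; delta) and C(beta, alpha; delta) yield such equivalence
  relations, which proves part 1 and the forward direction of part 2.
  From below: if a term m is a Maltsev operation on every alpha-class (a weak difference term when
  alpha is abelian), then the pairs (y, z) with (y, y) Delta (y, z) form a congruence that centralizes
  alpha and beta in both orders, so it contains [alpha, beta] and [beta, alpha].  This gives the converse
  of part 2 and, together with part 1, part 4.
  For part 3, the greatest congruence gamma with [gamma, alpha] = 0 is first shown to exist, by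
  describing it through the unary polynomials of A(alpha); so gamma <= (0 : alpha) gives C(gamma, alpha; 0).  Applying m to an element of Delta(alpha, gamma)
  that lies in alpha-hat produces a Delta(alpha, alpha)-related pair that differs from it only in the last
  coordinate, and C(gamma, alpha; 0) forces the two last coordinates to agree. *)

section \<open>Terms and congruences\<close>

fun subst_trm :: "('v \<Rightarrow> ('f, 'w) trm) \<Rightarrow> ('f, 'v) trm \<Rightarrow> ('f, 'w) trm" where
  "subst_trm \<sigma> (Var x) = \<sigma> x"
| "subst_trm \<sigma> (App f ts) = App f (map (subst_trm \<sigma>) ts)"

lemma eval_subst_trm: "eval A \<rho> (subst_trm \<sigma> t) = eval A (\<lambda>v. eval A \<rho> (\<sigma> v)) t"
  by (induction t) (simp_all cong: map_cong)

lemma wf_trm_subst_trm: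
  "wf_trm ar t \<Longrightarrow> (\<And>v. v \<in> vars_trm t \<Longrightarrow> wf_trm ar (\<sigma> v)) \<Longrightarrow> wf_trm ar (subst_trm \<sigma> t)"
  by (induction t) auto

lemma eval_rename: "eval A \<rho> (subst_trm (\<lambda>v. Var (g v)) t) = eval A (\<rho> \<circ> g) t"
  by (simp add: eval_subst_trm comp_def)

lemma wf_trm_rename: "wf_trm ar t \<Longrightarrow> wf_trm ar (subst_trm (\<lambda>v. Var (g v)) t)"
  by (rule wf_trm_subst_trm) auto

lemma finite_vars_trm: "finite (vars_trm t)"
  by (induction t) auto

lemma eval_vars_cong: "(\<And>v. v \<in> vars_trm t \<Longrightarrow> \<rho> v = \<rho>' v) \<Longrightarrow> eval A \<rho> t = eval A \<rho>' t"
proof (induction t)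
  case (App f ts)
  then have "map (eval A \<rho>) ts = map (eval A \<rho>') ts" by (auto intro!: map_cong)
  then show ?case by (simp only: eval.simps)
qed simp

lemma eval_in_car:
  "algebra ar A \<Longrightarrow> wf_trm ar t \<Longrightarrow> (\<And>v. v \<in> vars_trm t \<Longrightarrow> \<rho> v \<in> car A) \<Longrightarrow> eval A \<rho> t \<in> car A"
proof (induction t)
  case (App f ts)
  then have "set (map (eval A \<rho>) ts) \<subseteq> car A" by auto
  with App.prems show ?case unfolding algebra_def by auto
qed simp

lemma apply3_subst_trm:
  "eval B \<rho> (subst_trm (\<lambda>n. if n = 0 then t0 else if n = 1 then t1 else t2) d) =
   apply3 B d (eval B \<rho> t0) (eval B \<rho> t1) (eval B \<rho> t2)"
  unfolding apply3_def eval_subst_trm by (rule arg_cong[where f = "\<lambda>r. eval B r d"]) auto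

lemma apply3_in_car:
  "algebra ar B \<Longrightarrow> wf_trm ar d \<Longrightarrow> x \<in> car B \<Longrightarrow> y \<in> car B \<Longrightarrow> z \<in> car B \<Longrightarrow> apply3 B d x y z \<in> car B"
  unfolding apply3_def by (rule eval_in_car) auto

lemma congruenceI:
  assumes "\<theta> \<subseteq> car A \<times> car A" "\<And>x. x \<in> car A \<Longrightarrow> (x, x) \<in> \<theta>"
    and "\<And>x y. (x, y) \<in> \<theta> \<Longrightarrow> (y, x) \<in> \<theta>"
    and "\<And>x y z. (x, y) \<in> \<theta> \<Longrightarrow> (y, z) \<in> \<theta> \<Longrightarrow> (x, z) \<in> \<theta>"
    and "\<And>f xs ys. length xs = ar f \<Longrightarrow> list_all2 (\<lambda>x y. (x, y) \<in> \<theta>) xs ys \<Longrightarrow>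
           (opr A f xs, opr A f ys) \<in> \<theta>"
  shows "congruence ar A \<theta>"
  unfolding congruence_def equiv_def refl_on_def sym_def trans_def using assms by blast

lemma congruence_subset: "congruence ar A \<theta> \<Longrightarrow> \<theta> \<subseteq> car A \<times> car A"
  unfolding congruence_def equiv_def refl_on_def by blast

lemma congruence_car: "congruence ar A \<theta> \<Longrightarrow> (x, y) \<in> \<theta> \<Longrightarrow> x \<in> car A \<and> y \<in> car A"
  using congruence_subset by blast

lemma congruence_refl: "congruence ar A \<theta> \<Longrightarrow> x \<in> car A \<Longrightarrow> (x, x) \<in> \<theta>"
  unfolding congruence_def equiv_def refl_on_def by blast

lemma congruence_sym: "congruence ar A \<theta> \<Longrightarrow> (x, y) \<in> \<theta> \<Longrightarrow> (y, x) \<in> \<theta>"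
  unfolding congruence_def equiv_def sym_def by blast

lemma congruence_trans: "congruence ar A \<theta> \<Longrightarrow> (x, y) \<in> \<theta> \<Longrightarrow> (y, z) \<in> \<theta> \<Longrightarrow> (x, z) \<in> \<theta>"
  unfolding congruence_def equiv_def trans_def by blast

lemma congruence_opr:
  "congruence ar A \<theta> \<Longrightarrow> length xs = ar f \<Longrightarrow> list_all2 (\<lambda>x y. (x, y) \<in> \<theta>) xs ys \<Longrightarrow>
   (opr A f xs, opr A f ys) \<in> \<theta>"
  unfolding congruence_def by blast

lemma eval_congruence:
  "congruence ar A \<theta> \<Longrightarrow> wf_trm ar t \<Longrightarrow> (\<And>v. v \<in> vars_trm t \<Longrightarrow> (\<rho> v, \<rho>' v) \<in> \<theta>) \<Longrightarrow>
   (eval A \<rho> t, eval A \<rho>' t) \<in> \<theta>"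
proof (induction t)
  case (App f ts)
  have "list_all2 (\<lambda>x y. (x, y) \<in> \<theta>) (map (eval A \<rho>) ts) (map (eval A \<rho>') ts)"
    using App by (auto simp: list_all2_map1 list_all2_map2 intro!: list.rel_refl_strong)
  then show ?case using App.prems by (auto intro: congruence_opr)
qed simp

lemma apply3_congruence:
  "congruence ar B \<theta> \<Longrightarrow> wf_trm ar d \<Longrightarrow> (x, x') \<in> \<theta> \<Longrightarrow> (y, y') \<in> \<theta> \<Longrightarrow> (z, z') \<in> \<theta> \<Longrightarrow>
   (apply3 B d x y z, apply3 B d x' y' z') \<in> \<theta>"
  unfolding apply3_def by (rule eval_congruence) auto

lemma congruence_total: "algebra ar A \<Longrightarrow> congruence ar A (car A \<times> car A)"
proof (rule congruenceI)
  fix f xs ys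
  assume "algebra ar A" "length xs = ar f" "list_all2 (\<lambda>x y. (x, y) \<in> car A \<times> car A) xs ys"
  moreover from this(3) have "set xs \<subseteq> car A" "set ys \<subseteq> car A" "length ys = length xs"
    by (induction xs ys rule: list_all2_induct) auto
  ultimately show "(opr A f xs, opr A f ys) \<in> car A \<times> car A"
    unfolding algebra_def by auto
qed auto

lemma congruence_Id_on: "algebra ar A \<Longrightarrow> congruence ar A (Id_on (car A))"
proof (rule congruenceI)
  fix f xs ys
  assume "algebra ar A" "length xs = ar f" "list_all2 (\<lambda>x y. (x, y) \<in> Id_on (car A)) xs ys"
  moreover from this(3) have "xs = ys" "set xs \<subseteq> car A"
    by (induction xs ys rule: list_all2_induct) auto
  ultimately show "(opr A f xs, opr A f ys) \<in> Id_on (car A)"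
    unfolding algebra_def by auto
qed auto

lemma congruence_Inter:
  assumes "S \<noteq> {}" and cong: "\<And>\<theta>. \<theta> \<in> S \<Longrightarrow> congruence ar A \<theta>"
  shows "congruence ar A (\<Inter> S)"
proof (rule congruenceI)
  show "\<Inter> S \<subseteq> car A \<times> car A" using assms congruence_subset by blast
  show "(x, x) \<in> \<Inter> S" if "x \<in> car A" for x
    using that by (blast intro: congruence_refl[OF cong])
  show "(y, x) \<in> \<Inter> S" if "(x, y) \<in> \<Inter> S" for x y
    using that by (blast intro: congruence_sym[OF cong])
  show "(x, z) \<in> \<Inter> S" if "(x, y) \<in> \<Inter> S" "(y, z) \<in> \<Inter> S" for x y z
    using that by (blast intro: congruence_trans[OF cong])
  show "(opr A f xs, opr A f ys) \<in> \<Inter> S"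
    if "length xs = ar f" "list_all2 (\<lambda>x y. (x, y) \<in> \<Inter> S) xs ys" for f xs ys
  proof
    fix \<theta> assume "\<theta> \<in> S"
    with that(2) have "list_all2 (\<lambda>x y. (x, y) \<in> \<theta>) xs ys"
      by (auto elim: list_all2_mono)
    with cong[OF \<open>\<theta> \<in> S\<close>] that(1) show "(opr A f xs, opr A f ys) \<in> \<theta>"
      by (rule congruence_opr)
  qed
qed

lemma congruence_Int: "congruence ar A \<theta> \<Longrightarrow> congruence ar A \<theta>' \<Longrightarrow> congruence ar A (\<theta> \<inter> \<theta>')"
  using congruence_Inter[of "{\<theta>, \<theta>'}"] by auto

lemma congruence_Cg: "algebra ar C \<Longrightarrow> R \<subseteq> car C \<times> car C \<Longrightarrow> congruence ar C (Cg ar C R)"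
  unfolding Cg_def by (rule congruence_Inter) (use congruence_total in auto)

lemma subset_Cg: "R \<subseteq> Cg ar C R"
  unfolding Cg_def by blast

lemma Cg_least: "congruence ar C \<theta> \<Longrightarrow> R \<subseteq> \<theta> \<Longrightarrow> Cg ar C R \<subseteq> \<theta>"
  unfolding Cg_def by blast

section \<open>The term-condition commutator\<close>

lemma centralizesD:
  fixes t :: "('f, nat + nat) trm"
  assumes "centralizes ar A \<alpha> \<beta> \<delta>" "wf_trm ar t" "\<And>i. (a i, b i) \<in> \<alpha>" "\<And>j. (c j, d j) \<in> \<beta>"
    and "(eval A (case_sum a c) t, eval A (case_sum a d) t) \<in> \<delta>"
  shows "(eval A (case_sum b c) t, eval A (case_sum b d) t) \<in> \<delta>"
  using assms unfolding centralizes_def by meson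

lemma centralizes_Inter:
  "(\<And>\<delta>. \<delta> \<in> S \<Longrightarrow> centralizes ar A \<alpha> \<beta> \<delta>) \<Longrightarrow> centralizes ar A \<alpha> \<beta> (\<Inter> S)"
  unfolding centralizes_def by blast

lemma centralizes_mono:
  "centralizes ar A \<alpha> \<beta> \<delta> \<Longrightarrow> \<alpha>' \<subseteq> \<alpha> \<Longrightarrow> \<beta>' \<subseteq> \<beta> \<Longrightarrow> centralizes ar A \<alpha>' \<beta>' \<delta>"
  unfolding centralizes_def by blast

lemma centralizes_total:
  fixes ar :: "'f \<Rightarrow> nat" and A :: "('a, 'f) alg"
  assumes "algebra ar A" "\<alpha> \<subseteq> car A \<times> car A" "\<beta> \<subseteq> car A \<times> car A"
  shows "centralizes ar A \<alpha> \<beta> (car A \<times> car A)"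
  unfolding centralizes_def
proof (intro allI impI)
  fix t :: "('f, nat + nat) trm" and a b c d :: "nat \<Rightarrow> 'a"
  assume t: "wf_trm ar t" and "(\<forall>i. (a i, b i) \<in> \<alpha>) \<and> (\<forall>j. (c j, d j) \<in> \<beta>)"
  with assms have "b i \<in> car A" "c j \<in> car A" "d j \<in> car A" for i j
    by blast+
  then show "(eval A (case_sum b c) t, eval A (case_sum b d) t) \<in> car A \<times> car A"
    by (auto intro!: eval_in_car[OF assms(1) t] split: sum.split)
qed

lemma
  assumes "algebra ar A" "congruence ar A \<alpha>" "congruence ar A \<beta>"
  shows congruence_comm: "congruence ar A (comm ar A \<alpha> \<beta>)"
    and centralizes_comm: "centralizes ar A \<alpha> \<beta> (comm ar A \<alpha> \<beta>)"
proof -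
  have "car A \<times> car A \<in> {\<delta>. congruence ar A \<delta> \<and> centralizes ar A \<alpha> \<beta> \<delta>}"
    using assms by (simp add: congruence_total centralizes_total congruence_subset)
  then show "congruence ar A (comm ar A \<alpha> \<beta>)"
    unfolding comm_def by (intro congruence_Inter) auto
  show "centralizes ar A \<alpha> \<beta> (comm ar A \<alpha> \<beta>)"
    unfolding comm_def by (intro centralizes_Inter) auto
qed

lemma comm_least: "congruence ar A \<delta> \<Longrightarrow> centralizes ar A \<alpha> \<beta> \<delta> \<Longrightarrow> comm ar A \<alpha> \<beta> \<subseteq> \<delta>"
  unfolding comm_def by blast

lemma comm_mono: "\<alpha>' \<subseteq> \<alpha> \<Longrightarrow> \<beta>' \<subseteq> \<beta> \<Longrightarrow> comm ar A \<alpha>' \<beta>' \<subseteq> comm ar A \<alpha> \<beta>"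
  unfolding comm_def using centralizes_mono by blast

lemma comm_eq_Id_on_iff:
  assumes "algebra ar A" "congruence ar A \<alpha>" "congruence ar A \<beta>"
  shows "comm ar A \<alpha> \<beta> = Id_on (car A) \<longleftrightarrow> centralizes ar A \<alpha> \<beta> (Id_on (car A))"
proof
  assume "centralizes ar A \<alpha> \<beta> (Id_on (car A))"
  then have "comm ar A \<alpha> \<beta> \<subseteq> Id_on (car A)"
    by (intro comm_least congruence_Id_on assms(1))
  moreover have "Id_on (car A) \<subseteq> comm ar A \<alpha> \<beta>"
    using congruence_refl[OF congruence_comm[OF assms]] by auto
  ultimately show "comm ar A \<alpha> \<beta> = Id_on (car A)" by blast
qed (use centralizes_comm[OF assms] in simp)

lemma centralizes_unary_poly:
  fixes s :: "('f, nat) trm"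
  assumes cent: "centralizes ar A \<beta> \<alpha> \<delta>" and s: "wf_trm ar s"
    and \<sigma>\<tau>: "\<And>k. (\<sigma> k, \<tau> k) \<in> \<alpha>" and uv: "(u, v) \<in> \<beta>"
    and u: "(eval A (\<sigma>(i := u)) s, eval A (\<tau>(i := u)) s) \<in> \<delta>"
  shows "(eval A (\<sigma>(i := v)) s, eval A (\<tau>(i := v)) s) \<in> \<delta>"
proof -
  define t where "t = subst_trm (\<lambda>k. Var (if k = i then Inl (0::nat) else Inr k)) s"
  have t: "wf_trm ar t"
    unfolding t_def by (rule wf_trm_rename[OF s])
  have eval_t: "eval A (case_sum (\<lambda>_. x) \<rho>) t = eval A (\<rho>(i := x)) s" for x \<rho>
  proof -
    have "case_sum (\<lambda>_. x) \<rho> \<circ> (\<lambda>k. if k = i then Inl (0::nat) else Inr k) = \<rho>(i := x)"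
      by auto
    then show ?thesis unfolding t_def eval_rename by simp
  qed
  from centralizesD[OF cent t, of "\<lambda>_. u" "\<lambda>_. v" \<sigma> \<tau>] uv \<sigma>\<tau> u show ?thesis
    unfolding eval_t by simp
qed

section \<open>The algebra A(\<alpha>) and its polynomial congruences\<close>

lemma car_cong_alg [simp]: "car (cong_alg A \<alpha>) = \<alpha>"
  by (simp add: cong_alg_def)

lemma opr_cong_alg [simp]: "opr (cong_alg A \<alpha>) f ps = (opr A f (map fst ps), opr A f (map snd ps))"
  by (simp add: cong_alg_def)

lemma algebra_cong_alg:
  assumes "algebra ar A" "congruence ar A \<alpha>"
  shows "algebra ar (cong_alg A \<alpha>)"
  unfolding algebra_def
proof (intro conjI allI impI)
  obtain x where "x \<in> car A" using assms(1) unfolding algebra_def by blast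
  then show "car (cong_alg A \<alpha>) \<noteq> {}" using congruence_refl[OF assms(2)] by auto
  fix f xs assume "length xs = ar f \<and> set xs \<subseteq> car (cong_alg A \<alpha>)"
  then have "(opr A f (map fst xs), opr A f (map snd xs)) \<in> \<alpha>"
    by (intro congruence_opr[OF assms(2)]) (auto simp: list_all2_conv_all_nth dest!: nth_mem)
  then show "opr (cong_alg A \<alpha>) f xs \<in> car (cong_alg A \<alpha>)" by simp
qed

lemma eval_cong_alg: "eval (cong_alg A \<alpha>) \<rho> t = (eval A (fst \<circ> \<rho>) t, eval A (snd \<circ> \<rho>) t)"
  by (induction t) (simp_all add: comp_def cong: map_cong)

lemma eval_cong_alg_upd:
  "eval (cong_alg A \<alpha>) (\<rho>(i := (u, v))) t = (eval A ((fst \<circ> \<rho>)(i := u)) t, eval A ((snd \<circ> \<rho>)(i := v)) t)"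
proof -
  have "fst \<circ> \<rho>(i := (u, v)) = (fst \<circ> \<rho>)(i := u)" "snd \<circ> \<rho>(i := (u, v)) = (snd \<circ> \<rho>)(i := v)"
    by auto
  then show ?thesis by (simp add: eval_cong_alg)
qed

lemma apply3_cong_alg:
  "apply3 (cong_alg A \<alpha>) d (x, y) (x', y') (x'', y'') = (apply3 A d x x' x'', apply3 A d y y' y'')"
  unfolding apply3_def eval_cong_alg by (auto intro!: arg_cong[where f = "\<lambda>r. eval A r d"])

text \<open>For an equivalence relation E, this is the largest congruence contained in E.\<close>

definition poly_core :: "('f \<Rightarrow> nat) \<Rightarrow> ('b, 'f) alg \<Rightarrow> ('b \<times> 'b) set \<Rightarrow> ('b \<times> 'b) set" where
  "poly_core ar C E = {(p, q). p \<in> car C \<and> q \<in> car C \<and>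
     (\<forall>(s :: ('f, nat) trm) i \<rho>. wf_trm ar s \<and> (\<forall>v. \<rho> v \<in> car C) \<longrightarrow>
        (eval C (\<rho>(i := p)) s, eval C (\<rho>(i := q)) s) \<in> E)}"

lemma poly_coreD:
  fixes s :: "('f, nat) trm"
  shows "(p, q) \<in> poly_core ar C E \<Longrightarrow> wf_trm ar s \<Longrightarrow> (\<And>v. \<rho> v \<in> car C) \<Longrightarrow>
    (eval C (\<rho>(i := p)) s, eval C (\<rho>(i := q)) s) \<in> E"
  unfolding poly_core_def by blast

lemma poly_core_subset:
  fixes ar :: "'f \<Rightarrow> nat"
  shows "poly_core ar C E \<subseteq> E"
proof
  fix x assume x: "x \<in> poly_core ar C E"
  obtain p q where pq: "x = (p, q)" by fastforce
  with x have "p \<in> car C" unfolding poly_core_def by blast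
  with x pq have "(eval C ((\<lambda>_. p)(0 := p)) (Var 0 :: ('f, nat) trm),
      eval C ((\<lambda>_. p)(0 := q)) (Var 0 :: ('f, nat) trm)) \<in> E"
    by (intro poly_coreD) auto
  then show "x \<in> E" using pq by simp
qed

lemma eval_subst_opr:
  fixes s :: "('f, nat) trm"
  assumes "\<And>v. v \<in> vars_trm s \<Longrightarrow> v < M" and "\<And>v. v < M \<Longrightarrow> \<rho>' v = \<rho> v"
  shows "eval C \<rho>' (subst_trm (\<lambda>v. if v = i then App f (map Var [M..<M + n]) else Var v) s)
       = eval C (\<rho>(i := opr C f (map \<rho>' [M..<M + n]))) s"
  unfolding eval_subst_trm
proof (rule eval_vars_cong)
  fix v assume "v \<in> vars_trm s"
  with assms show "eval C \<rho>' (if v = i then App f (map Var [M..<M + n]) else Var v) =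
      (\<rho>(i := opr C f (map \<rho>' [M..<M + n]))) v"
    by (cases "v = i") (simp_all add: comp_def)
qed

lemma equivD:
  assumes "equiv S E"
  shows "x \<in> S \<Longrightarrow> (x, x) \<in> E" "(x, y) \<in> E \<Longrightarrow> (y, x) \<in> E"
    "(x, y) \<in> E \<Longrightarrow> (y, z) \<in> E \<Longrightarrow> (x, z) \<in> E"
  using assms unfolding equiv_def refl_on_def sym_def trans_def by blast+

lemma poly_core_opr:
  fixes s :: "('f, nat) trm"
  assumes E: "equiv (car C) E" and alg: "algebra ar C"
    and len: "length xs = ar f" and xy: "list_all2 (\<lambda>x y. (x, y) \<in> poly_core ar C E) xs ys"
    and s: "wf_trm ar s" and \<rho>: "\<And>v. \<rho> v \<in> car C"
  shows "(eval C (\<rho>(i := opr C f xs)) s, eval C (\<rho>(i := opr C f ys)) s) \<in> E"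
proof -
  define n where "n = length xs"
  have n: "length ys = n" "\<And>k. k < n \<Longrightarrow> (xs ! k, ys ! k) \<in> poly_core ar C E"
    using xy by (auto simp: n_def list_all2_conv_all_nth)
  have in_car: "xs ! k \<in> car C" "ys ! k \<in> car C" if "k < n" for k
    using n(2)[OF that] unfolding poly_core_def by simp_all
  obtain M where M: "\<And>v. v \<in> vars_trm s \<Longrightarrow> v < M"
    using finite_vars_trm[of s] unfolding finite_nat_set_iff_bounded by blast
  define s' where "s' = subst_trm (\<lambda>v. if v = i then App f (map Var [M..<M + n]) else Var v) s"
  have s': "wf_trm ar s'"
    unfolding s'_def by (rule wf_trm_subst_trm[OF s]) (simp add: len n_def)
  \<comment> \<open>the arguments sit in the fresh variables M, ..., M + n - 1; the first k of them are switched to ys\<close>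
  define \<rho>k where "\<rho>k k v = (if M \<le> v \<and> v < M + n
      then (if v - M < k then ys ! (v - M) else xs ! (v - M)) else \<rho> v)" for k v
  have \<rho>k: "\<rho>k k v \<in> car C" for k v
    using in_car[of "v - M"] \<rho>[of v] by (auto simp: \<rho>k_def)
  have eval_s': "eval C (\<rho>k k) s' = eval C (\<rho>(i := opr C f (map (\<rho>k k) [M..<M + n]))) s" for k
    unfolding s'_def by (rule eval_subst_opr) (auto simp: M \<rho>k_def)
  have "map (\<rho>k 0) [M..<M + n] = xs" "map (\<rho>k n) [M..<M + n] = ys"
    by (auto intro!: nth_equalityI simp: \<rho>k_def n_def n(1))
  moreover have "(eval C (\<rho>k 0) s', eval C (\<rho>k k) s') \<in> E" if "k \<le> n" for k
    using that
  proof (induction k)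
    case 0
    show ?case by (rule equivD(1)[OF E eval_in_car[OF alg s' \<rho>k]])
  next
    case (Suc k)
    then have "k < n" by simp
    have "(eval C ((\<rho>k k)(M + k := xs ! k)) s', eval C ((\<rho>k k)(M + k := ys ! k)) s') \<in> E"
      by (rule poly_coreD[OF n(2)[OF \<open>k < n\<close>] s' \<rho>k])
    moreover have "(\<rho>k k)(M + k := xs ! k) = \<rho>k k" "(\<rho>k k)(M + k := ys ! k) = \<rho>k (Suc k)"
      using \<open>k < n\<close> by (auto simp: \<rho>k_def fun_eq_iff)
    ultimately have "(eval C (\<rho>k k) s', eval C (\<rho>k (Suc k)) s') \<in> E" by simp
    with Suc show ?case by (auto intro: equivD(3)[OF E])
  qed
  ultimately show ?thesis using eval_s'[of 0] eval_s'[of n] by (metis order_refl)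
qed

lemma congruence_poly_core:
  assumes alg: "algebra ar C" and E: "equiv (car C) E"
  shows "congruence ar C (poly_core ar C E)"
proof (rule congruenceI)
  show "poly_core ar C E \<subseteq> car C \<times> car C" unfolding poly_core_def by blast
  show "(x, x) \<in> poly_core ar C E" if "x \<in> car C" for x
    using that unfolding poly_core_def by (auto intro!: equivD(1)[OF E] eval_in_car[OF alg])
  show "(y, x) \<in> poly_core ar C E" if "(x, y) \<in> poly_core ar C E" for x y
    using that unfolding poly_core_def by (auto intro: equivD(2)[OF E])
  show "(x, z) \<in> poly_core ar C E" if "(x, y) \<in> poly_core ar C E" "(y, z) \<in> poly_core ar C E" for x y z
    using that unfolding poly_core_def by (blast intro: equivD(3)[OF E])
  show "(opr C f xs, opr C f ys) \<in> poly_core ar C E"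
    if len: "length xs = ar f" and xy: "list_all2 (\<lambda>x y. (x, y) \<in> poly_core ar C E) xs ys" for f xs ys
  proof -
    from xy have "set xs \<subseteq> car C" "set ys \<subseteq> car C" "length ys = ar f"
      using len unfolding poly_core_def by (auto simp: list_all2_conv_all_nth set_conv_nth)
    with alg len have "opr C f xs \<in> car C" "opr C f ys \<in> car C"
      unfolding algebra_def by auto
    with poly_core_opr[OF E alg len xy] show ?thesis
      unfolding poly_core_def by blast
  qed
qed

section \<open>The centralizer\<close>

definition diag_equiv :: "('a \<times> 'a) set \<Rightarrow> (('a \<times> 'a) \<times> ('a \<times> 'a)) set" where
  "diag_equiv \<alpha> = {(p, q). p \<in> \<alpha> \<and> q \<in> \<alpha> \<and> (fst p = snd p \<longleftrightarrow> fst q = snd q)}"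

lemma equiv_diag_equiv: "equiv \<alpha> (diag_equiv \<alpha>)"
  unfolding diag_equiv_def equiv_def refl_on_def sym_def trans_def by auto

locale algebra_cong =
  fixes ar :: "'f \<Rightarrow> nat" and A :: "('a, 'f) alg" and \<alpha> :: "('a \<times> 'a) set"
  assumes algebra: "algebra ar A" and cong_\<alpha>: "congruence ar A \<alpha>"
begin

lemmas \<alpha>_sym = congruence_sym[OF cong_\<alpha>]
   and \<alpha>_trans = congruence_trans[OF cong_\<alpha>]

lemma algebra_A\<alpha>: "algebra ar (cong_alg A \<alpha>)"
  by (rule algebra_cong_alg[OF algebra cong_\<alpha>])

lemma eval_upd_in_\<alpha>:
  fixes s :: "('f, nat) trm"
  shows "wf_trm ar s \<Longrightarrow> (\<And>k. (\<sigma> k, \<tau> k) \<in> \<alpha>) \<Longrightarrow> u \<in> car A \<Longrightarrow>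
    (eval A (\<sigma>(i := u)) s, eval A (\<tau>(i := u)) s) \<in> \<alpha>"
  by (rule eval_congruence[OF cong_\<alpha>]) (auto intro: congruence_refl[OF cong_\<alpha>])

lemma alpha_hat_iff:
  "((x, y), (u, v)) \<in> alpha_hat \<alpha> \<longleftrightarrow> (x, y) \<in> \<alpha> \<and> (u, v) \<in> \<alpha> \<and> (x, u) \<in> \<alpha>"
proof
  assume h: "(x, y) \<in> \<alpha> \<and> (u, v) \<in> \<alpha> \<and> (x, u) \<in> \<alpha>"
  then have "(x, x) \<in> \<alpha>"
    using congruence_car[OF cong_\<alpha>] congruence_refl[OF cong_\<alpha>] by blast
  with h have "(x, p) \<in> \<alpha>" if "p \<in> {x, y, u, v}" for p
    using that \<alpha>_trans by blast
  then have "(p, q) \<in> \<alpha>" if "p \<in> {x, y, u, v}" "q \<in> {x, y, u, v}" for p q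
    using that \<alpha>_sym \<alpha>_trans by meson
  with h show "((x, y), (u, v)) \<in> alpha_hat \<alpha>"
    unfolding alpha_hat_def by blast
qed (simp add: alpha_hat_def)

lemma congruence_diag_preimage:
  assumes \<theta>: "congruence ar (cong_alg A \<alpha>) \<theta>"
  shows "congruence ar A {(x, y). x \<in> car A \<and> y \<in> car A \<and> ((x, x), (y, y)) \<in> \<theta>}"
    (is "congruence ar A ?R")
proof (rule congruenceI)
  show "(x, x) \<in> ?R" if "x \<in> car A" for x
    using that congruence_refl[OF \<theta>] congruence_refl[OF cong_\<alpha>] by simp
  show "(y, x) \<in> ?R" if "(x, y) \<in> ?R" for x y
    using that congruence_sym[OF \<theta>] by blast
  show "(x, z) \<in> ?R" if "(x, y) \<in> ?R" "(y, z) \<in> ?R" for x y z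
    using that congruence_trans[OF \<theta>] by blast
  show "(opr A f xs, opr A f ys) \<in> ?R"
    if len: "length xs = ar f" and xy: "list_all2 (\<lambda>x y. (x, y) \<in> ?R) xs ys" for f xs ys
  proof -
    from xy have "set xs \<subseteq> car A" "set ys \<subseteq> car A" "length ys = ar f"
      using len by (auto simp: list_all2_conv_all_nth set_conv_nth)
    with algebra len have "opr A f xs \<in> car A" "opr A f ys \<in> car A"
      unfolding algebra_def by auto
    moreover from xy have "list_all2 (\<lambda>p q. (p, q) \<in> \<theta>) (map (\<lambda>x. (x, x)) xs) (map (\<lambda>x. (x, x)) ys)"
      by (auto simp: list_all2_map1 list_all2_map2 elim: list_all2_mono)
    then have "(opr (cong_alg A \<alpha>) f (map (\<lambda>x. (x, x)) xs), opr (cong_alg A \<alpha>) f (map (\<lambda>x. (x, x)) ys)) \<in> \<theta>"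
      using len by (intro congruence_opr[OF \<theta>]) simp_all
    ultimately show ?thesis by (simp add: comp_def)
  qed
qed auto

text \<open>A pair (x, y) lies in the centralizer (0 : \<alpha>) iff no unary polynomial of A(\<alpha>) maps exactly
  one of (x, x), (y, y) onto the diagonal.\<close>

definition centralizing_pairs :: "('a \<times> 'a) set" where
  "centralizing_pairs = {(x, y). x \<in> car A \<and> y \<in> car A \<and>
     ((x, x), (y, y)) \<in> poly_core ar (cong_alg A \<alpha>) (diag_equiv \<alpha>)}"

lemma congruence_centralizing_pairs: "congruence ar A centralizing_pairs"
  unfolding centralizing_pairs_def
  by (intro congruence_diag_preimage congruence_poly_core algebra_A\<alpha>) (simp add: equiv_diag_equiv)

lemma subset_centralizing_pairs:
  assumes \<gamma>: "congruence ar A \<gamma>" and cent: "centralizes ar A \<gamma> \<alpha> (Id_on (car A))"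
  shows "\<gamma> \<subseteq> centralizing_pairs"
proof clarify
  fix x y assume xy: "(x, y) \<in> \<gamma>"
  have xy_car: "x \<in> car A" "y \<in> car A" using congruence_car[OF \<gamma> xy] by auto
  have "eval A (\<sigma>(i := x)) s = eval A (\<tau>(i := x)) s \<longleftrightarrow> eval A (\<sigma>(i := y)) s = eval A (\<tau>(i := y)) s"
    if s: "wf_trm ar s" and \<sigma>\<tau>: "\<And>k. (\<sigma> k, \<tau> k) \<in> \<alpha>" for s :: "('f, nat) trm" and \<sigma> \<tau> i
  proof -
    have "eval A (\<sigma>(i := z)) s \<in> car A" if "z \<in> car A" for z
      using that \<sigma>\<tau> congruence_car[OF cong_\<alpha>] by (intro eval_in_car[OF algebra s]) auto
    moreover have "(eval A (\<sigma>(i := x)) s, eval A (\<tau>(i := x)) s) \<in> Id_on (car A) \<longleftrightarrow>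
        (eval A (\<sigma>(i := y)) s, eval A (\<tau>(i := y)) s) \<in> Id_on (car A)"
      using centralizes_unary_poly[where \<sigma> = \<sigma> and \<tau> = \<tau> and i = i, OF cent s \<sigma>\<tau> xy]
        centralizes_unary_poly[where \<sigma> = \<sigma> and \<tau> = \<tau> and i = i, OF cent s \<sigma>\<tau> congruence_sym[OF \<gamma> xy]]
      by (rule iffI)
    ultimately show ?thesis using xy_car by (simp add: Id_on_iff)
  qed
  then have "((x, x), (y, y)) \<in> poly_core ar (cong_alg A \<alpha>) (diag_equiv \<alpha>)"
    unfolding poly_core_def diag_equiv_def
    using xy_car eval_upd_in_\<alpha> congruence_refl[OF cong_\<alpha>] by (simp add: eval_cong_alg_upd)
  with xy_car show "(x, y) \<in> centralizing_pairs"
    unfolding centralizing_pairs_def by simp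
qed

lemma centralizing_pairs_switch:
  fixes t :: "('f, nat + nat) trm"
  assumes xy: "(x, y) \<in> centralizing_pairs" and t: "wf_trm ar t"
    and a: "\<And>k. a k \<in> car A" and ce: "\<And>j. (c j, e j) \<in> \<alpha>"
    and eq: "eval A (case_sum (a(k := x)) c) t = eval A (case_sum (a(k := x)) e) t"
  shows "eval A (case_sum (a(k := y)) c) t = eval A (case_sum (a(k := y)) e) t"
proof -
  define g :: "nat + nat \<Rightarrow> nat" where "g v = (case v of Inl k \<Rightarrow> 2 * k | Inr j \<Rightarrow> 2 * j + 1)" for v
  define \<rho> where "\<rho> n = (if even n then (a (n div 2), a (n div 2)) else (c (n div 2), e (n div 2)))" for n
  define s where "s = subst_trm (\<lambda>v. Var (g v)) t"
  have [simp]: "Suc (2 * j) \<noteq> 2 * k" for j k :: nat by presburger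
  have eval_s: "eval (cong_alg A \<alpha>) (\<rho>(2 * k := (z, z))) s =
      (eval A (case_sum (a(k := z)) c) t, eval A (case_sum (a(k := z)) e) t)" for z
  proof -
    have "fst \<circ> (\<rho>(2 * k := (z, z)) \<circ> g) = case_sum (a(k := z)) c"
      "snd \<circ> (\<rho>(2 * k := (z, z)) \<circ> g) = case_sum (a(k := z)) e"
      by (auto simp: fun_eq_iff g_def \<rho>_def split: sum.split)
    then show ?thesis unfolding s_def eval_rename eval_cong_alg by simp
  qed
  have "\<rho> n \<in> car (cong_alg A \<alpha>)" for n
    using a ce congruence_refl[OF cong_\<alpha>] by (simp add: \<rho>_def)
  with xy wf_trm_rename[OF t]
  have "(eval (cong_alg A \<alpha>) (\<rho>(2 * k := (x, x))) s, eval (cong_alg A \<alpha>) (\<rho>(2 * k := (y, y))) s)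
      \<in> diag_equiv \<alpha>"
    unfolding centralizing_pairs_def s_def by (blast intro: poly_coreD)
  with eq show ?thesis
    unfolding eval_s diag_equiv_def by simp
qed

lemma centralizes_centralizing_pairs: "centralizes ar A centralizing_pairs \<alpha> (Id_on (car A))"
  unfolding centralizes_def
proof (intro allI impI, elim conjE)
  fix t :: "('f, nat + nat) trm" and a b c e :: "nat \<Rightarrow> 'a"
  assume t: "wf_trm ar t" and ab: "\<forall>i. (a i, b i) \<in> centralizing_pairs" and ce: "\<forall>j. (c j, e j) \<in> \<alpha>"
    and eq: "(eval A (case_sum a c) t, eval A (case_sum a e) t) \<in> Id_on (car A)"
  have ab_car: "a k \<in> car A" "b k \<in> car A" for k
    using ab congruence_car[OF congruence_centralizing_pairs] by blast+
  define mix where "mix n k = (if k < n then b k else a k)" for n k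
  have "eval A (case_sum (mix n) c) t = eval A (case_sum (mix n) e) t" for n
  proof (induction n)
    case 0
    have "mix 0 = a" by (simp add: fun_eq_iff mix_def)
    then show ?case using eq by (metis Id_onE prod.inject)
  next
    case (Suc n)
    have upd: "(mix n)(n := a n) = mix n" "(mix n)(n := b n) = mix (Suc n)"
      by (auto simp: fun_eq_iff mix_def)
    have "mix n k \<in> car A" for k
      using ab_car by (simp add: mix_def)
    then have "eval A (case_sum ((mix n)(n := b n)) c) t = eval A (case_sum ((mix n)(n := b n)) e) t"
      by (rule centralizing_pairs_switch[OF ab[rule_format] t _ ce[rule_format]]) (simp add: upd Suc.IH)
    then show ?case by (simp only: upd)
  qed
  moreover have "finite (Inl -` vars_trm t)"
    by (rule finite_vimageI[OF finite_vars_trm]) simp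
  then obtain N where "\<forall>k \<in> Inl -` vars_trm t. k < N"
    unfolding finite_nat_set_iff_bounded by blast
  then have "eval A (case_sum (mix N) x) t = eval A (case_sum b x) t" for x
    by (intro eval_vars_cong) (auto simp: mix_def split: sum.split)
  moreover have "c j \<in> car A" for j
    using ce congruence_car[OF cong_\<alpha>] by blast
  then have "eval A (case_sum b c) t \<in> car A"
    using ab_car by (intro eval_in_car[OF algebra t]) (auto split: sum.split)
  ultimately show "(eval A (case_sum b c) t, eval A (case_sum b e) t) \<in> Id_on (car A)"
    by (metis Id_onI)
qed

lemma centralizer_eq_centralizing_pairs: "centralizer ar A \<alpha> = centralizing_pairs"
  unfolding centralizer_def
proof (rule Greatest_equality)
  show "congruence ar A centralizing_pairs \<and> comm ar A centralizing_pairs \<alpha> = Id_on (car A)"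
    using comm_eq_Id_on_iff[OF algebra congruence_centralizing_pairs cong_\<alpha>]
      congruence_centralizing_pairs centralizes_centralizing_pairs by blast
  fix \<gamma> assume "congruence ar A \<gamma> \<and> comm ar A \<gamma> \<alpha> = Id_on (car A)"
  then show "\<gamma> \<le> centralizing_pairs"
    using comm_eq_Id_on_iff[OF algebra _ cong_\<alpha>] subset_centralizing_pairs by blast
qed

lemma centralizes_if_subset_centralizer:
  "\<gamma> \<subseteq> centralizer ar A \<alpha> \<Longrightarrow> centralizes ar A \<gamma> \<alpha> (Id_on (car A))"
  using centralizes_mono[OF centralizes_centralizing_pairs]
  by (simp add: centralizer_eq_centralizing_pairs)

end

section \<open>Difference terms\<close>

definition diff_term_of :: "('f \<Rightarrow> nat) \<Rightarrow> ('a, 'f) alg \<Rightarrow> ('f, nat) trm \<Rightarrow> bool" where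
  "diff_term_of ar A d \<longleftrightarrow> wf_trm ar d \<and> (\<forall>\<theta> a b. congruence ar A \<theta> \<and> (a, b) \<in> \<theta> \<longrightarrow>
     apply3 A d a a b = b \<and> (apply3 A d a b b, a) \<in> comm ar A \<theta> \<theta>)"

definition weak_diff_term_of :: "('f \<Rightarrow> nat) \<Rightarrow> ('a, 'f) alg \<Rightarrow> ('f, nat) trm \<Rightarrow> bool" where
  "weak_diff_term_of ar A d \<longleftrightarrow> wf_trm ar d \<and> (\<forall>\<theta> a b. congruence ar A \<theta> \<and> (a, b) \<in> \<theta> \<longrightarrow>
     (apply3 A d a a b, b) \<in> comm ar A \<theta> \<theta> \<and> (b, apply3 A d b a a) \<in> comm ar A \<theta> \<theta>)"

definition maltsev_on_classes :: "('f \<Rightarrow> nat) \<Rightarrow> ('a, 'f) alg \<Rightarrow> ('a \<times> 'a) set \<Rightarrow> ('f, nat) trm \<Rightarrow> bool" where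
  "maltsev_on_classes ar A \<alpha> m \<longleftrightarrow> wf_trm ar m \<and>
     (\<forall>x y. (x, y) \<in> \<alpha> \<longrightarrow> apply3 A m x x y = y \<and> apply3 A m y x x = y)"

lemma diff_term_of_if_is_diff_term:
  fixes A :: "('a, 'f) alg"
  assumes "is_diff_term TYPE('a) ar \<Sigma> d" and "models ar \<Sigma> A"
  shows "diff_term_of ar A d"
proof -
  from assms(1) have "wf_trm ar d" "diff_term_at TYPE('a) ar \<Sigma> d"
    by (simp_all add: is_diff_term_def)
  with assms(2) show ?thesis
    unfolding diff_term_at_def diff_term_of_def by blast
qed

lemma weak_diff_term_of_if_is_weak_diff_term:
  fixes A :: "('a, 'f) alg"
  assumes "is_weak_diff_term TYPE('a) ar \<Sigma> d" and "models ar \<Sigma> A"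
  shows "weak_diff_term_of ar A d"
proof -
  from assms(1) have "wf_trm ar d" "weak_diff_term_at TYPE('a) ar \<Sigma> d"
    by (simp_all add: is_weak_diff_term_def)
  with assms(2) show ?thesis
    unfolding weak_diff_term_at_def weak_diff_term_of_def by blast
qed

lemma diff_term_of_cancel_left:
  assumes "diff_term_of ar A d" "algebra ar A" "x \<in> car A" "w \<in> car A"
  shows "apply3 A d x x w = w"
proof -
  have "(x, w) \<in> car A \<times> car A" using assms(3,4) by simp
  with assms(1) congruence_total[OF assms(2)] show ?thesis
    unfolding diff_term_of_def by blast
qed

lemma weak_diff_term_of_if_diff_term_of:
  assumes alg: "algebra ar A" and d: "diff_term_of ar A d"
  shows "weak_diff_term_of ar A d"
proof -
  have "(apply3 A d a a b, b) \<in> comm ar A \<theta> \<theta> \<and> (b, apply3 A d b a a) \<in> comm ar A \<theta> \<theta>"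
    if \<theta>: "congruence ar A \<theta>" and ab: "(a, b) \<in> \<theta>" for \<theta> a b
  proof -
    have comm: "congruence ar A (comm ar A \<theta> \<theta>)" by (rule congruence_comm[OF alg \<theta> \<theta>])
    have "apply3 A d a a b = b" "(apply3 A d b a a, b) \<in> comm ar A \<theta> \<theta>"
      using d \<theta> ab congruence_sym[OF \<theta> ab] unfolding diff_term_of_def by blast+
    moreover have "b \<in> car A" using congruence_car[OF \<theta> ab] by simp
    ultimately show ?thesis
      using congruence_refl[OF comm] congruence_sym[OF comm] by simp
  qed
  with d show ?thesis
    unfolding weak_diff_term_of_def diff_term_of_def by blast
qed

lemma maltsev_on_classes_if_abelian:
  assumes m: "weak_diff_term_of ar A m" and \<alpha>: "congruence ar A \<alpha>" "abelian ar A \<alpha>"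
  shows "maltsev_on_classes ar A \<alpha> m"
proof -
  have "apply3 A m x x y = y \<and> apply3 A m y x x = y" if "(x, y) \<in> \<alpha>" for x y
  proof -
    have "(apply3 A m x x y, y) \<in> Id_on (car A)" "(y, apply3 A m y x x) \<in> Id_on (car A)"
      using m \<alpha> that unfolding weak_diff_term_of_def abelian_def by metis+
    then show ?thesis by auto
  qed
  with m show ?thesis
    unfolding weak_diff_term_of_def maltsev_on_classes_def by blast
qed

section \<open>The congruence Delta\<close>

locale cong_pair = algebra_cong ar A \<alpha>
  for ar :: "'f \<Rightarrow> nat" and A :: "('a, 'f) alg" and \<alpha> +
  fixes \<beta> :: "('a \<times> 'a) set"
  assumes cong_\<beta>: "congruence ar A \<beta>"
begin

lemma congruence_Delta: "congruence ar (cong_alg A \<alpha>) (Delta ar A \<alpha> \<beta>)"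
  unfolding Delta_def
  by (rule congruence_Cg[OF algebra_A\<alpha>]) (use congruence_car[OF cong_\<beta>] congruence_refl[OF cong_\<alpha>] in auto)

lemma Delta_diagI: "(u, v) \<in> \<beta> \<Longrightarrow> ((u, u), (v, v)) \<in> Delta ar A \<alpha> \<beta>"
  unfolding Delta_def by (rule subsetD[OF subset_Cg]) blast

lemma Delta_least:
  assumes "congruence ar (cong_alg A \<alpha>) \<theta>" and "\<And>u v. (u, v) \<in> \<beta> \<Longrightarrow> ((u, u), (v, v)) \<in> \<theta>"
  shows "Delta ar A \<alpha> \<beta> \<subseteq> \<theta>"
  unfolding Delta_def by (rule Cg_least[OF assms(1)]) (use assms(2) in blast)

lemma Delta_refl: "(x, y) \<in> \<alpha> \<Longrightarrow> ((x, y), (x, y)) \<in> Delta ar A \<alpha> \<beta>"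
  using congruence_refl[OF congruence_Delta] by simp

lemma Delta_sym: "(p, q) \<in> Delta ar A \<alpha> \<beta> \<Longrightarrow> (q, p) \<in> Delta ar A \<alpha> \<beta>"
  by (rule congruence_sym[OF congruence_Delta])

lemma Delta_trans:
  "(p, q) \<in> Delta ar A \<alpha> \<beta> \<Longrightarrow> (q, r) \<in> Delta ar A \<alpha> \<beta> \<Longrightarrow> (p, r) \<in> Delta ar A \<alpha> \<beta>"
  by (rule congruence_trans[OF congruence_Delta])

lemma congruence_\<beta>_square:
  "congruence ar (cong_alg A \<alpha>)
     {((x, y), (u, v)). (x, y) \<in> \<alpha> \<and> (u, v) \<in> \<alpha> \<and> (x, u) \<in> \<beta> \<and> (y, v) \<in> \<beta>}"
  (is "congruence _ _ ?R")
proof (rule congruenceI)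
  show "?R \<subseteq> car (cong_alg A \<alpha>) \<times> car (cong_alg A \<alpha>)" by auto
  show "(p, p) \<in> ?R" if "p \<in> car (cong_alg A \<alpha>)" for p
    using that congruence_car[OF cong_\<alpha>] congruence_refl[OF cong_\<beta>] by (cases p) auto
  show "(q, p) \<in> ?R" if "(p, q) \<in> ?R" for p q
    using that congruence_sym[OF cong_\<beta>] by auto
  show "(p, r) \<in> ?R" if "(p, q) \<in> ?R" "(q, r) \<in> ?R" for p q r
    using that congruence_trans[OF cong_\<beta>] by auto
  show "(opr (cong_alg A \<alpha>) f ps, opr (cong_alg A \<alpha>) f qs) \<in> ?R"
    if len: "length ps = ar f" and pq: "list_all2 (\<lambda>p q. (p, q) \<in> ?R) ps qs" for f ps qs
  proof -
    from pq have "set ps \<subseteq> \<alpha>" "set qs \<subseteq> \<alpha>" "length qs = ar f"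
      using len by (auto simp: list_all2_conv_all_nth set_conv_nth)
    with len have "opr (cong_alg A \<alpha>) f ps \<in> \<alpha>" "opr (cong_alg A \<alpha>) f qs \<in> \<alpha>"
      using algebra_A\<alpha> unfolding algebra_def by auto
    moreover from pq have "list_all2 (\<lambda>x y. (x, y) \<in> \<beta>) (map fst ps) (map fst qs)"
      "list_all2 (\<lambda>x y. (x, y) \<in> \<beta>) (map snd ps) (map snd qs)"
      by (auto simp: list_all2_conv_all_nth)
    then have "(opr A f (map fst ps), opr A f (map fst qs)) \<in> \<beta>"
      "(opr A f (map snd ps), opr A f (map snd qs)) \<in> \<beta>"
      using len by (auto intro: congruence_opr[OF cong_\<beta>])
    ultimately show ?thesis by simp
  qed
qed

lemma DeltaD:
  assumes "((x, y), (u, v)) \<in> Delta ar A \<alpha> \<beta>"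
  shows "(x, y) \<in> \<alpha>" "(u, v) \<in> \<alpha>" "(x, u) \<in> \<beta>" "(y, v) \<in> \<beta>"
proof -
  have "Delta ar A \<alpha> \<beta> \<subseteq> {((x, y), (u, v)). (x, y) \<in> \<alpha> \<and> (u, v) \<in> \<alpha> \<and> (x, u) \<in> \<beta> \<and> (y, v) \<in> \<beta>}"
    by (rule Delta_least[OF congruence_\<beta>_square])
      (use congruence_car[OF cong_\<beta>] congruence_refl[OF cong_\<alpha>] in auto)
  with assms show "(x, y) \<in> \<alpha>" "(u, v) \<in> \<alpha>" "(x, u) \<in> \<beta>" "(y, v) \<in> \<beta>" by auto
qed

lemma Delta_apply3:
  assumes "wf_trm ar d" and "((x1, y1), (u1, v1)) \<in> Delta ar A \<alpha> \<beta>"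
    and "((x2, y2), (u2, v2)) \<in> Delta ar A \<alpha> \<beta>" and "((x3, y3), (u3, v3)) \<in> Delta ar A \<alpha> \<beta>"
  shows "((apply3 A d x1 x2 x3, apply3 A d y1 y2 y3), (apply3 A d u1 u2 u3, apply3 A d v1 v2 v3))
    \<in> Delta ar A \<alpha> \<beta>"
  using apply3_congruence[OF congruence_Delta assms] by (simp add: apply3_cong_alg)

lemma Delta_eval:
  assumes "wf_trm ar t" and "\<And>v. ((\<sigma> v, \<tau> v), (\<sigma>' v, \<tau>' v)) \<in> Delta ar A \<alpha> \<beta>"
  shows "((eval A \<sigma> t, eval A \<tau> t), (eval A \<sigma>' t, eval A \<tau>' t)) \<in> Delta ar A \<alpha> \<beta>"
  using eval_congruence[OF congruence_Delta assms(1), of "\<lambda>v. (\<sigma> v, \<tau> v)" "\<lambda>v. (\<sigma>' v, \<tau>' v)"] assms(2)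
  by (simp add: eval_cong_alg comp_def)

lemma Delta_subset_equiv:
  assumes E: "equiv \<alpha> E"
    and images: "\<And>(s :: ('f, nat) trm) i \<sigma> \<tau> u v. wf_trm ar s \<Longrightarrow> (\<And>k. (\<sigma> k, \<tau> k) \<in> \<alpha>) \<Longrightarrow>
      (u, v) \<in> \<beta> \<Longrightarrow> (eval A (\<sigma>(i := u)) s, eval A (\<tau>(i := u)) s) \<in> \<alpha> \<Longrightarrow>
      (eval A (\<sigma>(i := v)) s, eval A (\<tau>(i := v)) s) \<in> \<alpha> \<Longrightarrow>
      ((eval A (\<sigma>(i := u)) s, eval A (\<tau>(i := u)) s), (eval A (\<sigma>(i := v)) s, eval A (\<tau>(i := v)) s)) \<in> E"
  shows "Delta ar A \<alpha> \<beta> \<subseteq> E"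
proof -
  have "Delta ar A \<alpha> \<beta> \<subseteq> poly_core ar (cong_alg A \<alpha>) E"
  proof (rule Delta_least[OF congruence_poly_core[OF algebra_A\<alpha>]])
    show "equiv (car (cong_alg A \<alpha>)) E" using E by simp
    fix u v assume uv: "(u, v) \<in> \<beta>"
    then have uv_car: "u \<in> car A" "v \<in> car A" using congruence_car[OF cong_\<beta>] by auto
    have "(eval (cong_alg A \<alpha>) (\<rho>(i := (u, u))) s, eval (cong_alg A \<alpha>) (\<rho>(i := (v, v))) s) \<in> E"
      if s: "wf_trm ar s" and \<rho>: "\<forall>k. \<rho> k \<in> \<alpha>" for s :: "('f, nat) trm" and i \<rho>
    proof -
      have \<rho>': "\<And>k. ((fst \<circ> \<rho>) k, (snd \<circ> \<rho>) k) \<in> \<alpha>" using \<rho> by simp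
      show ?thesis
        unfolding eval_cong_alg_upd
        by (intro images[OF s \<rho>' uv] eval_upd_in_\<alpha>[OF s \<rho>'] uv_car)
    qed
    with uv_car show "((u, u), (v, v)) \<in> poly_core ar (cong_alg A \<alpha>) E"
      unfolding poly_core_def using congruence_refl[OF cong_\<alpha>] by simp
  qed
  then show ?thesis using poly_core_subset by blast
qed

lemma centralizes_diff_unary_poly:
  fixes s :: "('f, nat) trm"
  assumes d: "wf_trm ar d" "\<And>x w. x \<in> car A \<Longrightarrow> w \<in> car A \<Longrightarrow> apply3 A d x x w = w"
    and \<delta>: "congruence ar A \<delta>" "centralizes ar A \<alpha> \<beta> \<delta>"
    and s: "wf_trm ar s" and \<sigma>\<tau>: "\<And>k. (\<sigma> k, \<tau> k) \<in> \<alpha>" and uv: "(u, v) \<in> \<beta>" and w: "w \<in> car A"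
  shows "(apply3 A d (eval A (\<tau>(i := u)) s) (eval A (\<sigma>(i := u)) s) w,
          apply3 A d (eval A (\<tau>(i := v)) s) (eval A (\<sigma>(i := v)) s) w) \<in> \<delta>"
proof -
  \<comment> \<open>the term d(s(\<tau>, y), s(\<sigma>, y), w) with the parameters of the two copies of s and w as
    x-variables (w is x-variable 0) and the polynomial variable as the single y-variable\<close>
  define copy where "copy j = subst_trm (\<lambda>k. Var (if k = i then Inr (0::nat) else Inl (2 * k + j))) s" for j
  define S where "S = subst_trm (\<lambda>n. if n = 0 then copy 1 else if n = 1 then copy 2 else Var (Inl 0)) d"
  define X where "X f g n = (if n = 0 then w else if odd n then f ((n - 1) div 2) else g ((n - 1) div 2))"
    for f g :: "nat \<Rightarrow> 'a" and n
  have S: "wf_trm ar S"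
    unfolding S_def copy_def by (rule wf_trm_subst_trm[OF d(1)]) (auto intro: wf_trm_rename[OF s])
  have eval_S: "eval A (case_sum (X f g) y) S = apply3 A d (eval A (f(i := y 0)) s) (eval A (g(i := y 0)) s) w"
    for f g y
  proof -
    have "case_sum (X f g) y \<circ> (\<lambda>k. if k = i then Inr 0 else Inl (2 * k + 1)) = f(i := y 0)"
      "case_sum (X f g) y \<circ> (\<lambda>k. if k = i then Inr 0 else Inl (2 * k + 2)) = g(i := y 0)"
      by (auto simp: fun_eq_iff X_def)
    then show ?thesis
      unfolding S_def apply3_subst_trm copy_def eval_rename by (simp add: X_def)
  qed
  have car: "\<sigma> k \<in> car A" "\<tau> k \<in> car A" for k
    using congruence_car[OF cong_\<alpha> \<sigma>\<tau>] by auto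
  have X: "(X \<sigma> \<sigma> n, X \<tau> \<sigma> n) \<in> \<alpha>" for n
    using w car \<sigma>\<tau> congruence_refl[OF cong_\<alpha>] by (simp add: X_def)
  have "eval A (\<sigma>(i := z)) s \<in> car A" if "z \<in> car A" for z
    using that car by (intro eval_in_car[OF algebra s]) auto
  then have "(eval A (case_sum (X \<sigma> \<sigma>) (\<lambda>_. u)) S, eval A (case_sum (X \<sigma> \<sigma>) (\<lambda>_. v)) S) \<in> \<delta>"
    unfolding eval_S using d(2) w congruence_car[OF cong_\<beta> uv] congruence_refl[OF \<delta>(1) w] by simp
  from centralizesD[OF \<delta>(2) S X _ this] uv show ?thesis
    unfolding eval_S by simp
qed

lemma Delta_diff_cong:
  assumes d: "wf_trm ar d" "\<And>x w. x \<in> car A \<Longrightarrow> w \<in> car A \<Longrightarrow> apply3 A d x x w = w"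
    and \<delta>: "congruence ar A \<delta>" "centralizes ar A \<alpha> \<beta> \<delta>"
    and D: "((x, y), (u, v)) \<in> Delta ar A \<alpha> \<beta>" and w: "w \<in> car A"
  shows "(apply3 A d y x w, apply3 A d v u w) \<in> \<delta>"
proof -
  define E where "E = {((x, y), (u, v)). (x, y) \<in> \<alpha> \<and> (u, v) \<in> \<alpha> \<and>
    (\<forall>w \<in> car A. (apply3 A d y x w, apply3 A d v u w) \<in> \<delta>)}"
  have "equiv \<alpha> E"
  proof (rule equivI)
    show "E \<subseteq> \<alpha> \<times> \<alpha>" unfolding E_def by auto
    have "apply3 A d y x w \<in> car A" if "(x, y) \<in> \<alpha>" "w \<in> car A" for x y w
      using that congruence_car[OF cong_\<alpha>] by (blast intro: apply3_in_car[OF algebra d(1)])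
    then show "refl_on \<alpha> E"
      unfolding refl_on_def E_def by (auto intro: congruence_refl[OF \<delta>(1)])
    show "sym E" unfolding sym_def E_def by (auto intro: congruence_sym[OF \<delta>(1)])
    show "trans E" unfolding trans_def E_def by (auto intro: congruence_trans[OF \<delta>(1)])
  qed
  then have "Delta ar A \<alpha> \<beta> \<subseteq> E"
    by (rule Delta_subset_equiv) (auto simp: E_def intro: centralizes_diff_unary_poly[OF d \<delta>])
  with D w show ?thesis unfolding E_def by blast
qed

lemma Delta_mem_iff:
  assumes cent: "centralizes ar A \<beta> \<alpha> \<delta>" and D: "((x, y), (u, v)) \<in> Delta ar A \<alpha> \<beta>"
  shows "(x, y) \<in> \<delta> \<longleftrightarrow> (u, v) \<in> \<delta>"
proof -
  define E where "E = {(p, q). p \<in> \<alpha> \<and> q \<in> \<alpha> \<and> (p \<in> \<delta> \<longleftrightarrow> q \<in> \<delta>)}"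
  have "equiv \<alpha> E"
    unfolding E_def equiv_def refl_on_def sym_def trans_def by auto
  then have "Delta ar A \<alpha> \<beta> \<subseteq> E"
  proof (rule Delta_subset_equiv)
    fix s :: "('f, nat) trm" and i \<sigma> \<tau> u v
    assume s: "wf_trm ar s" and \<sigma>\<tau>: "\<And>k. (\<sigma> k, \<tau> k) \<in> \<alpha>" and uv: "(u, v) \<in> \<beta>"
      and "(eval A (\<sigma>(i := u)) s, eval A (\<tau>(i := u)) s) \<in> \<alpha>"
      and "(eval A (\<sigma>(i := v)) s, eval A (\<tau>(i := v)) s) \<in> \<alpha>"
    moreover have "(eval A (\<sigma>(i := u)) s, eval A (\<tau>(i := u)) s) \<in> \<delta> \<longleftrightarrow>
        (eval A (\<sigma>(i := v)) s, eval A (\<tau>(i := v)) s) \<in> \<delta>"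
      using centralizes_unary_poly[where \<sigma> = \<sigma> and \<tau> = \<tau> and i = i, OF cent s \<sigma>\<tau> uv]
        centralizes_unary_poly[where \<sigma> = \<sigma> and \<tau> = \<tau> and i = i, OF cent s \<sigma>\<tau> congruence_sym[OF cong_\<beta> uv]]
      by (rule iffI)
    ultimately show "((eval A (\<sigma>(i := u)) s, eval A (\<tau>(i := u)) s), (eval A (\<sigma>(i := v)) s, eval A (\<tau>(i := v)) s))
        \<in> E" unfolding E_def by simp
  qed
  with D show ?thesis unfolding E_def by blast
qed

lemma Delta_fst_eq_imp_comm:
  assumes d: "diff_term_of ar A d" and D: "((a, b), (a, e)) \<in> Delta ar A \<alpha> \<beta>"
  shows "(b, e) \<in> comm ar A \<alpha> \<beta>"
proof -
  let ?\<delta> = "comm ar A \<alpha> \<beta>" and ?\<theta> = "\<alpha> \<inter> \<beta>"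
  have wf: "wf_trm ar d" using d by (simp add: diff_term_of_def)
  have d_idem: "\<And>x w. x \<in> car A \<Longrightarrow> w \<in> car A \<Longrightarrow> apply3 A d x x w = w"
    by (rule diff_term_of_cancel_left[OF d algebra])
  have \<delta>: "congruence ar A ?\<delta>" "centralizes ar A \<alpha> \<beta> ?\<delta>"
    by (rule congruence_comm[OF algebra cong_\<alpha> cong_\<beta>], rule centralizes_comm[OF algebra cong_\<alpha> cong_\<beta>])
  have \<theta>: "congruence ar A ?\<theta>" by (rule congruence_Int[OF cong_\<alpha> cong_\<beta>])
  \<comment> \<open>d(x, y, y) is [\<theta>, \<theta>]-related to x, and [\<alpha> \<and> \<beta>, \<alpha> \<and> \<beta>] \<le> [\<alpha>, \<beta>]\<close>
  have d_right: "(apply3 A d x y y, x) \<in> ?\<delta>" if "(x, y) \<in> ?\<theta>" for x y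
    using d that \<theta> comm_mono[of ?\<theta> \<alpha> ?\<theta> \<beta> ar A] unfolding diff_term_of_def by blast
  from DeltaD[OF D] have ab: "(a, b) \<in> \<alpha>" and eb: "(e, b) \<in> ?\<theta>"
    using \<alpha>_sym \<alpha>_trans congruence_sym[OF cong_\<beta>] by blast+
  then have car: "a \<in> car A" "b \<in> car A" using congruence_car[OF cong_\<alpha>] by blast+
  define f where "f = apply3 A d e b b"
  have "((apply3 A d a a b, apply3 A d b b b), (apply3 A d a a b, f)) \<in> Delta ar A \<alpha> \<beta>"
    unfolding f_def using Delta_apply3[OF wf D Delta_refl[OF ab] Delta_refl] congruence_refl[OF cong_\<alpha> car(2)]
    by blast
  then have "((b, b), (b, f)) \<in> Delta ar A \<alpha> \<beta>" using d_idem car by simp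
  from Delta_diff_cong[OF wf d_idem \<delta> this car(2)]
  have "(b, apply3 A d f b b) \<in> ?\<delta>" using d_idem car by simp
  moreover have "(apply3 A d e b b, apply3 A d b b b) \<in> ?\<theta>"
    using apply3_congruence[OF \<theta> wf eb] congruence_refl[OF \<theta> car(2)] by blast
  then have "(f, b) \<in> ?\<theta>" unfolding f_def using d_idem car(2) by simp
  then have "(apply3 A d f b b, f) \<in> ?\<delta>" by (rule d_right)
  moreover have "(f, e) \<in> ?\<delta>" unfolding f_def using d_right[OF eb] .
  ultimately show ?thesis using congruence_trans[OF \<delta>(1)] by blast
qed

definition Delta_diag_rel :: "('a \<times> 'a) set" where
  "Delta_diag_rel = {(y, z). (y, z) \<in> \<alpha> \<and> ((y, y), (y, z)) \<in> Delta ar A \<alpha> \<beta>}"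

lemma centralizes_\<beta>_\<alpha>_Delta_diag_rel: "centralizes ar A \<beta> \<alpha> Delta_diag_rel"
  unfolding centralizes_def
proof (intro allI impI, elim conjE)
  fix t :: "('f, nat + nat) trm" and a b c e :: "nat \<Rightarrow> 'a"
  assume t: "wf_trm ar t" and ab: "\<forall>i. (a i, b i) \<in> \<beta>" and ce: "\<forall>j. (c j, e j) \<in> \<alpha>"
    and diag: "(eval A (case_sum a c) t, eval A (case_sum a e) t) \<in> Delta_diag_rel"
  define P P' Q Q' where "P = eval A (case_sum a c) t" and "P' = eval A (case_sum a e) t"
    and "Q = eval A (case_sum b c) t" and "Q' = eval A (case_sum b e) t"
  have car: "b i \<in> car A" "c j \<in> car A" for i j
    using ab ce congruence_car[OF cong_\<alpha>] congruence_car[OF cong_\<beta>] by blast+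
  have D1: "((P, P), (P, P')) \<in> Delta ar A \<alpha> \<beta>"
    using diag unfolding Delta_diag_rel_def P_def P'_def by simp
  have D2: "((P, P'), (Q, Q')) \<in> Delta ar A \<alpha> \<beta>"
    unfolding P_def P'_def Q_def Q'_def
    by (rule Delta_eval[OF t]) (simp add: ab ce Delta_diagI Delta_refl split: sum.split)
  have "(Q, P) \<in> \<beta>"
    unfolding P_def Q_def using ab car congruence_sym[OF cong_\<beta>] congruence_refl[OF cong_\<beta>]
    by (intro eval_congruence[OF cong_\<beta> t]) (simp split: sum.split)
  then have D3: "((Q, Q), (P, P)) \<in> Delta ar A \<alpha> \<beta>" by (rule Delta_diagI)
  have "(Q, Q') \<in> \<alpha>"
    unfolding Q_def Q'_def using ce car congruence_refl[OF cong_\<alpha>]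
    by (intro eval_congruence[OF cong_\<alpha> t]) (simp split: sum.split)
  with Delta_trans[OF D3 Delta_trans[OF D1 D2]] show "(Q, Q') \<in> Delta_diag_rel"
    unfolding Delta_diag_rel_def by simp
qed

end

section \<open>Delta under a Maltsev operation on the classes of \<alpha>\<close>

locale maltsev_pair = cong_pair ar A \<alpha> \<beta>
  for ar :: "'f \<Rightarrow> nat" and A :: "('a, 'f) alg" and \<alpha> \<beta> +
  fixes m :: "('f, nat) trm"
  assumes maltsev: "maltsev_on_classes ar A \<alpha> m"
begin

lemma wf_m: "wf_trm ar m"
  using maltsev by (simp add: maltsev_on_classes_def)

lemma m_left: "(x, y) \<in> \<alpha> \<Longrightarrow> apply3 A m x x y = y"
  using maltsev by (simp add: maltsev_on_classes_def)

lemma m_right: "(x, y) \<in> \<alpha> \<Longrightarrow> apply3 A m y x x = y"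
  using maltsev by (simp add: maltsev_on_classes_def)

lemma Delta_fst_eq_imp_rel:
  assumes cent: "centralizes ar A \<beta> \<alpha> \<delta>" and \<delta>: "congruence ar A \<delta>"
    and D: "((a, b), (a, e)) \<in> Delta ar A \<alpha> \<beta>"
  shows "(b, e) \<in> \<delta>"
proof -
  from DeltaD[OF D] have ab: "(a, b) \<in> \<alpha>" and be: "(b, e) \<in> \<alpha>"
    using \<alpha>_sym \<alpha>_trans by blast+
  then have bb: "(b, b) \<in> \<alpha>" using \<alpha>_sym \<alpha>_trans by blast
  have "((apply3 A m a a b, apply3 A m b b b), (apply3 A m a a b, apply3 A m e b b)) \<in> Delta ar A \<alpha> \<beta>"
    by (rule Delta_apply3[OF wf_m D Delta_refl[OF ab] Delta_refl[OF bb]])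
  then have "((b, b), (b, e)) \<in> Delta ar A \<alpha> \<beta>"
    using m_left[OF ab] m_left[OF bb] m_right[OF be] by simp
  with Delta_mem_iff[OF cent] congruence_refl[OF \<delta>] congruence_car[OF cong_\<alpha> ab] show ?thesis
    by blast
qed

lemma Delta_change_fst:
  assumes D: "((p, q), (p, r)) \<in> Delta ar A \<alpha> \<beta>" and xp: "(x, p) \<in> \<alpha>"
  shows "((x, q), (x, r)) \<in> Delta ar A \<alpha> \<beta>"
proof -
  from DeltaD[OF D] have pq: "(p, q) \<in> \<alpha>" and pr: "(p, r) \<in> \<alpha>" by auto
  then have xq: "(x, q) \<in> \<alpha>" and qq: "(q, q) \<in> \<alpha>" and qr: "(q, r) \<in> \<alpha>"
    using xp \<alpha>_sym \<alpha>_trans by blast+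
  have "((apply3 A m p p x, apply3 A m q q q), (apply3 A m p p x, apply3 A m r q q)) \<in> Delta ar A \<alpha> \<beta>"
    by (rule Delta_apply3[OF wf_m D Delta_refl[OF pq] Delta_refl[OF xq]])
  then show ?thesis using m_left[OF \<alpha>_sym[OF xp]] m_left[OF qq] m_right[OF qr] by simp
qed

lemma congruence_Delta_diag_rel: "congruence ar A Delta_diag_rel"
proof (rule congruenceI)
  show "Delta_diag_rel \<subseteq> car A \<times> car A"
    unfolding Delta_diag_rel_def using congruence_subset[OF cong_\<alpha>] by auto
  show "(x, x) \<in> Delta_diag_rel" if "x \<in> car A" for x
    unfolding Delta_diag_rel_def using congruence_refl[OF cong_\<alpha> that] Delta_refl by simp
  show "(y, x) \<in> Delta_diag_rel" if "(x, y) \<in> Delta_diag_rel" for x y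
  proof -
    from that have xy: "(x, y) \<in> \<alpha>" and "((x, x), (x, y)) \<in> Delta ar A \<alpha> \<beta>"
      unfolding Delta_diag_rel_def by auto
    then have "((y, x), (y, y)) \<in> Delta ar A \<alpha> \<beta>" using Delta_change_fst \<alpha>_sym by blast
    with xy show ?thesis unfolding Delta_diag_rel_def using Delta_sym \<alpha>_sym by blast
  qed
  show "(x, z) \<in> Delta_diag_rel" if "(x, y) \<in> Delta_diag_rel" "(y, z) \<in> Delta_diag_rel" for x y z
  proof -
    from that have xy: "(x, y) \<in> \<alpha>" and yz: "(y, z) \<in> \<alpha>"
      and D1: "((x, x), (x, y)) \<in> Delta ar A \<alpha> \<beta>" and D2: "((y, y), (y, z)) \<in> Delta ar A \<alpha> \<beta>"
      unfolding Delta_diag_rel_def by auto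
    from Delta_change_fst[OF D2 xy] have "((x, y), (x, z)) \<in> Delta ar A \<alpha> \<beta>" .
    with xy yz D1 show ?thesis unfolding Delta_diag_rel_def using Delta_trans \<alpha>_trans by blast
  qed
  show "(opr A f xs, opr A f ys) \<in> Delta_diag_rel"
    if len: "length xs = ar f" and xy: "list_all2 (\<lambda>x y. (x, y) \<in> Delta_diag_rel) xs ys" for f xs ys
  proof -
    from xy have "list_all2 (\<lambda>x y. (x, y) \<in> \<alpha>) xs ys"
      "list_all2 (\<lambda>p q. (p, q) \<in> Delta ar A \<alpha> \<beta>) (map (\<lambda>x. (x, x)) xs) (zip xs ys)"
      unfolding Delta_diag_rel_def by (auto simp: list_all2_conv_all_nth)
    then have "(opr A f xs, opr A f ys) \<in> \<alpha>"
      "(opr (cong_alg A \<alpha>) f (map (\<lambda>x. (x, x)) xs), opr (cong_alg A \<alpha>) f (zip xs ys)) \<in> Delta ar A \<alpha> \<beta>"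
      using len congruence_opr[OF cong_\<alpha>] congruence_opr[OF congruence_Delta, of "map (\<lambda>x. (x, x)) xs"]
      by simp_all
    moreover have "map fst (zip xs ys) = xs" "map snd (zip xs ys) = ys"
      using list_all2_lengthD[OF xy] by simp_all
    ultimately show ?thesis unfolding Delta_diag_rel_def by (simp add: comp_def)
  qed
qed

lemma centralizes_\<alpha>_\<beta>_Delta_diag_rel: "centralizes ar A \<alpha> \<beta> Delta_diag_rel"
  unfolding centralizes_def
proof (intro allI impI, elim conjE)
  fix t :: "('f, nat + nat) trm" and a b c e :: "nat \<Rightarrow> 'a"
  assume t: "wf_trm ar t" and ab: "\<forall>i. (a i, b i) \<in> \<alpha>" and ce: "\<forall>j. (c j, e j) \<in> \<beta>"
    and diag: "(eval A (case_sum a c) t, eval A (case_sum a e) t) \<in> Delta_diag_rel"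
  define P P' Q Q' where "P = eval A (case_sum a c) t" and "P' = eval A (case_sum a e) t"
    and "Q = eval A (case_sum b c) t" and "Q' = eval A (case_sum b e) t"
  have car: "a i \<in> car A" "c j \<in> car A" for i j
    using ab ce congruence_car[OF cong_\<alpha>] congruence_car[OF cong_\<beta>] by blast+
  have D1: "((P, P), (P, P')) \<in> Delta ar A \<alpha> \<beta>" and PP': "(P, P') \<in> \<alpha>"
    using diag unfolding Delta_diag_rel_def P_def P'_def by simp_all
  have D2: "((P, Q), (P', Q')) \<in> Delta ar A \<alpha> \<beta>"
    unfolding P_def P'_def Q_def Q'_def
    by (rule Delta_eval[OF t]) (simp add: ab ce Delta_diagI Delta_refl split: sum.split)
  have "(P, P') \<in> \<beta>"
    unfolding P_def P'_def using ce car congruence_refl[OF cong_\<beta>]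
    by (intro eval_congruence[OF cong_\<beta> t]) (simp split: sum.split)
  then have D3: "((P, P), (P', P')) \<in> Delta ar A \<alpha> \<beta>" by (rule Delta_diagI)
  from DeltaD[OF D2] have PQ: "(P, Q) \<in> \<alpha>" and P'Q': "(P', Q') \<in> \<alpha>" by auto
  then have PP: "(P, P) \<in> \<alpha>" using \<alpha>_sym \<alpha>_trans by blast
  have "((apply3 A m P P P, apply3 A m Q P P), (apply3 A m P' P' P, apply3 A m Q' P' P'))
      \<in> Delta ar A \<alpha> \<beta>"
    by (rule Delta_apply3[OF wf_m D2 D3 D1])
  then have "((P, Q), (P, Q')) \<in> Delta ar A \<alpha> \<beta>"
    using m_left[OF PP] m_right[OF PQ] m_left[OF \<alpha>_sym[OF PP']] m_right[OF P'Q'] by simp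
  from Delta_change_fst[OF this \<alpha>_sym[OF PQ]] have "((Q, Q), (Q, Q')) \<in> Delta ar A \<alpha> \<beta>" .
  moreover have "(Q, Q') \<in> \<alpha>" using PQ PP' P'Q' \<alpha>_sym \<alpha>_trans by blast
  ultimately show "(Q, Q') \<in> Delta_diag_rel"
    unfolding Delta_diag_rel_def by simp
qed

lemma comm_\<beta>_\<alpha>_subset_Delta_diag_rel: "comm ar A \<beta> \<alpha> \<subseteq> Delta_diag_rel"
  by (rule comm_least[OF congruence_Delta_diag_rel centralizes_\<beta>_\<alpha>_Delta_diag_rel])

lemma comm_\<alpha>_\<beta>_subset_Delta_diag_rel: "comm ar A \<alpha> \<beta> \<subseteq> Delta_diag_rel"
  by (rule comm_least[OF congruence_Delta_diag_rel centralizes_\<alpha>_\<beta>_Delta_diag_rel])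

lemma ex_Delta_fst_eq_iff_comm:
  assumes "b \<in> car A"
  shows "(\<exists>a \<in> car A. (a, b) \<in> \<alpha> \<and> (a, d) \<in> \<alpha> \<and> ((a, b), (a, d)) \<in> Delta ar A \<alpha> \<beta>)
    \<longleftrightarrow> (b, d) \<in> comm ar A \<beta> \<alpha>"
proof
  assume "\<exists>a \<in> car A. (a, b) \<in> \<alpha> \<and> (a, d) \<in> \<alpha> \<and> ((a, b), (a, d)) \<in> Delta ar A \<alpha> \<beta>"
  then show "(b, d) \<in> comm ar A \<beta> \<alpha>"
    using Delta_fst_eq_imp_rel[OF centralizes_comm congruence_comm] algebra cong_\<alpha> cong_\<beta> by blast
next
  assume "(b, d) \<in> comm ar A \<beta> \<alpha>"
  with comm_\<beta>_\<alpha>_subset_Delta_diag_rel have "(b, d) \<in> \<alpha>" "((b, b), (b, d)) \<in> Delta ar A \<alpha> \<beta>"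
    unfolding Delta_diag_rel_def by auto
  with assms congruence_refl[OF cong_\<alpha>] show "\<exists>a \<in> car A. (a, b) \<in> \<alpha> \<and> (a, d) \<in> \<alpha> \<and> ((a, b), (a, d)) \<in> Delta ar A \<alpha> \<beta>"
    by blast
qed

lemma Delta_\<alpha>_\<alpha>_eq_Int_alpha_hat:
  assumes \<alpha>\<beta>: "\<alpha> \<subseteq> \<beta>" and \<beta>_centralizer: "\<beta> \<subseteq> centralizer ar A \<alpha>"
  shows "Delta ar A \<alpha> \<alpha> = Delta ar A \<alpha> \<beta> \<inter> alpha_hat \<alpha>"
proof -
  interpret \<alpha>\<alpha>: maltsev_pair ar A \<alpha> \<alpha> m
    by unfold_locales (fact cong_\<alpha> maltsev)+
  have sub: "Delta ar A \<alpha> \<alpha> \<subseteq> Delta ar A \<alpha> \<beta>"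
    by (rule \<alpha>\<alpha>.Delta_least[OF congruence_Delta]) (use \<alpha>\<beta> Delta_diagI in blast)
  have "Delta ar A \<alpha> \<alpha> \<subseteq> alpha_hat \<alpha>"
  proof clarify
    fix x y u v assume "((x, y), (u, v)) \<in> Delta ar A \<alpha> \<alpha>"
    then show "((x, y), (u, v)) \<in> alpha_hat \<alpha>"
      using \<alpha>\<alpha>.DeltaD alpha_hat_iff by blast
  qed
  moreover have "Delta ar A \<alpha> \<beta> \<inter> alpha_hat \<alpha> \<subseteq> Delta ar A \<alpha> \<alpha>"
  proof clarify
    fix x y u v assume D: "((x, y), (u, v)) \<in> Delta ar A \<alpha> \<beta>" and "((x, y), (u, v)) \<in> alpha_hat \<alpha>"
    then have xy: "(x, y) \<in> \<alpha>" and xu: "(x, u) \<in> \<alpha>" by (simp_all add: alpha_hat_iff)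
    then have xx: "(x, x) \<in> \<alpha>" using \<alpha>_sym \<alpha>_trans by blast
    define z where "z = apply3 A m y x u"
    have "((apply3 A m x x x, apply3 A m y x x), (apply3 A m x x u, z)) \<in> Delta ar A \<alpha> \<alpha>"
      unfolding z_def
      by (rule \<alpha>\<alpha>.Delta_apply3[OF wf_m \<alpha>\<alpha>.Delta_refl[OF xy] \<alpha>\<alpha>.Delta_refl[OF xx] \<alpha>\<alpha>.Delta_diagI[OF xu]])
    then have D1: "((x, y), (u, z)) \<in> Delta ar A \<alpha> \<alpha>"
      using m_left[OF xx] m_right[OF xy] m_left[OF xu] by simp
    with sub D have "((u, z), (u, v)) \<in> Delta ar A \<alpha> \<beta>"
      using Delta_sym Delta_trans by blast
    then have "(z, v) \<in> Id_on (car A)"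
      by (rule Delta_fst_eq_imp_rel[OF centralizes_if_subset_centralizer[OF \<beta>_centralizer]
            congruence_Id_on[OF algebra]])
    with D1 show "((x, y), (u, v)) \<in> Delta ar A \<alpha> \<alpha>" by auto
  qed
  ultimately show ?thesis using sub by blast
qed

lemma Delta_diff_term_iff:
  assumes d: "diff_term_of ar A m" and ab: "(a, b) \<in> \<alpha>"
  shows "((a, b), (c, apply3 A m b a c)) \<in> Delta ar A \<alpha> \<beta> \<longleftrightarrow> (c, a) \<in> \<beta>"
proof
  assume "((a, b), (c, apply3 A m b a c)) \<in> Delta ar A \<alpha> \<beta>"
  then show "(c, a) \<in> \<beta>" using DeltaD(3) congruence_sym[OF cong_\<beta>] by blast
next
  assume "(c, a) \<in> \<beta>"
  then have ac: "(a, c) \<in> \<beta>" by (rule congruence_sym[OF cong_\<beta>])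
  then have car: "a \<in> car A" "c \<in> car A" using congruence_car[OF cong_\<beta>] by auto
  have aa: "(a, a) \<in> \<alpha>" by (rule congruence_refl[OF cong_\<alpha> car(1)])
  have "((apply3 A m a a a, apply3 A m b a a), (apply3 A m a a c, apply3 A m b a c)) \<in> Delta ar A \<alpha> \<beta>"
    by (rule Delta_apply3[OF wf_m Delta_refl[OF ab] Delta_refl[OF aa] Delta_diagI[OF ac]])
  then show "((a, b), (c, apply3 A m b a c)) \<in> Delta ar A \<alpha> \<beta>"
    using m_left[OF aa] m_right[OF ab] diff_term_of_cancel_left[OF d algebra car] by simp
qed

lemma Delta_iff_diff_term_comm:
  assumes d: "diff_term_of ar A m" and ab: "(a, b) \<in> \<alpha>"
  shows "((a, b), (c, e)) \<in> Delta ar A \<alpha> \<beta> \<longleftrightarrow>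
    ((a, b), (c, apply3 A m b a c)) \<in> Delta ar A \<alpha> \<beta> \<and> (e, apply3 A m b a c) \<in> comm ar A \<alpha> \<beta>"
    (is "?D \<longleftrightarrow> ?X \<and> ?C")
proof
  let ?w = "apply3 A m b a c"
  have comm: "congruence ar A (comm ar A \<alpha> \<beta>)" by (rule congruence_comm[OF algebra cong_\<alpha> cong_\<beta>])
  show "?X \<and> ?C" if D: ?D
  proof
    show X: ?X using D Delta_diff_term_iff[OF d ab] DeltaD(3) congruence_sym[OF cong_\<beta>] by blast
    with D have "((c, ?w), (c, e)) \<in> Delta ar A \<alpha> \<beta>" using Delta_sym Delta_trans by blast
    then have "(?w, e) \<in> comm ar A \<alpha> \<beta>" by (rule Delta_fst_eq_imp_comm[OF d])
    then show ?C by (rule congruence_sym[OF comm])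
  qed
  show ?D if "?X \<and> ?C"
  proof -
    from that have X: ?X and C: ?C by simp_all
    from X have cw: "(c, ?w) \<in> \<alpha>" using DeltaD(2) by blast
    from C have "(?w, e) \<in> Delta_diag_rel"
      using comm_\<alpha>_\<beta>_subset_Delta_diag_rel congruence_sym[OF comm] by blast
    then have "((?w, ?w), (?w, e)) \<in> Delta ar A \<alpha> \<beta>" unfolding Delta_diag_rel_def by simp
    from Delta_change_fst[OF this cw] X show ?D using Delta_trans by blast
  qed
qed

lemma Delta_iff_diff_term:
  assumes "diff_term_of ar A m" and "(a, b) \<in> \<alpha>"
  shows "(((a, b), (c, e)) \<in> Delta ar A \<alpha> \<beta> \<longleftrightarrow>
      ((a, b), (c, apply3 A m b a c)) \<in> Delta ar A \<alpha> \<beta> \<and> (e, apply3 A m b a c) \<in> comm ar A \<alpha> \<beta>)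
    \<and> (((a, b), (c, apply3 A m b a c)) \<in> Delta ar A \<alpha> \<beta> \<and> (e, apply3 A m b a c) \<in> comm ar A \<alpha> \<beta>
      \<longleftrightarrow> (c, a) \<in> \<beta> \<and> (a, b) \<in> \<alpha> \<and> (e, apply3 A m b a c) \<in> comm ar A \<alpha> \<beta>)"
  using Delta_iff_diff_term_comm[OF assms] Delta_diff_term_iff[OF assms] assms(2) by blast

end

lemma (in cong_pair) maltsev_pair_if_weak_diff_term:
  "weak_diff_term_of ar A m \<Longrightarrow> abelian ar A \<alpha> \<Longrightarrow> maltsev_pair ar A \<alpha> \<beta> m"
  by (intro maltsev_pair.intro cong_pair_axioms maltsev_pair_axioms.intro
      maltsev_on_classes_if_abelian[OF _ cong_\<alpha>])

lemma (in cong_pair) maltsev_pair_if_diff_term: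
  "diff_term_of ar A m \<Longrightarrow> abelian ar A \<alpha> \<Longrightarrow> maltsev_pair ar A \<alpha> \<beta> m"
  by (intro maltsev_pair_if_weak_diff_term weak_diff_term_of_if_diff_term_of[OF algebra])

lemma (in cong_pair) ex_maltsev_pair:
  fixes \<Sigma> :: "(('f, nat) trm \<times> ('f, nat) trm) set"
  assumes "models ar \<Sigma> A" and "has_weak_diff_term TYPE('a) ar \<Sigma>" and "abelian ar A \<alpha>"
  shows "\<exists>m. maltsev_pair ar A \<alpha> \<beta> m"
  using assms maltsev_pair_if_weak_diff_term weak_diff_term_of_if_is_weak_diff_term
  unfolding has_weak_diff_term_def by blast

theorem lemma2p1:
  fixes ar :: "'f \<Rightarrow> nat"
    and \<Sigma> :: "(('f, nat) trm \<times> ('f, nat) trm) set"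
    and A :: "('a, 'f) alg"
    and \<alpha> \<beta> :: "('a \<times> 'a) set"
  assumes wfS: "wf_identities ar \<Sigma>"
    and AV: "models ar \<Sigma> A"
    and con_a: "congruence ar A \<alpha>"
    and con_b: "congruence ar A \<beta>"
  shows
    "(has_diff_term TYPE('a) ar \<Sigma> \<longrightarrow>
       (\<forall>a\<in>car A. \<forall>b\<in>car A. \<forall>d\<in>car A. (a, b) \<in> \<alpha> \<and> (a, d) \<in> \<alpha> \<longrightarrow>
          ((a, b), (a, d)) \<in> Delta ar A \<alpha> \<beta> \<longrightarrow> (b, d) \<in> comm ar A \<alpha> \<beta>))
   \<and> (has_weak_diff_term TYPE('a) ar \<Sigma> \<and> abelian ar A \<alpha> \<longrightarrow>
       (\<forall>b\<in>car A. \<forall>d\<in>car A.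
          (\<exists>a\<in>car A. (a, b) \<in> \<alpha> \<and> (a, d) \<in> \<alpha> \<and> ((a, b), (a, d)) \<in> Delta ar A \<alpha> \<beta>)
          \<longleftrightarrow> (b, d) \<in> comm ar A \<beta> \<alpha>))
   \<and> (has_weak_diff_term TYPE('a) ar \<Sigma> \<and> abelian ar A \<alpha> \<longrightarrow>
       (\<forall>\<gamma>. congruence ar A \<gamma> \<and> \<alpha> \<subseteq> \<gamma> \<and> \<gamma> \<subseteq> centralizer ar A \<alpha> \<longrightarrow>
          Delta ar A \<alpha> \<alpha> = Delta ar A \<alpha> \<gamma> \<inter> alpha_hat \<alpha>))
   \<and> (\<forall>m. is_diff_term TYPE('a) ar \<Sigma> m \<and> abelian ar A \<alpha> \<longrightarrow>
       (\<forall>a b c d. (a, b) \<in> \<alpha> \<and> (c, d) \<in> \<alpha> \<longrightarrow>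
          (let P1 = ((a, b), (c, d)) \<in> Delta ar A \<alpha> \<beta>;
               P2 = (((a, b), (c, apply3 A m b a c)) \<in> Delta ar A \<alpha> \<beta> \<and>
                     (d, apply3 A m b a c) \<in> comm ar A \<alpha> \<beta>);
               P3 = ((c, a) \<in> \<beta> \<and> (a, b) \<in> \<alpha> \<and> (d, apply3 A m b a c) \<in> comm ar A \<alpha> \<beta>)
           in (P1 \<longleftrightarrow> P2) \<and> (P2 \<longleftrightarrow> P3))))"
proof -
  have alg: "algebra ar A" using AV by (simp add: models_def)
  have pair: "cong_pair ar A \<alpha> \<gamma>" if "congruence ar A \<gamma>" for \<gamma>
    using alg con_a that by unfold_locales
  interpret cong_pair ar A \<alpha> \<beta> by (rule pair[OF con_b])
  have diff: "diff_term_of ar A m" if "is_diff_term TYPE('a) ar \<Sigma> m" for m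
    using that AV by (rule diff_term_of_if_is_diff_term)
  have part1: "(b, d) \<in> comm ar A \<alpha> \<beta>"
    if "has_diff_term TYPE('a) ar \<Sigma>" "((a, b), (a, d)) \<in> Delta ar A \<alpha> \<beta>" for a b d
    using that Delta_fst_eq_imp_comm diff unfolding has_diff_term_def by blast
  have part2: "(\<exists>a\<in>car A. (a, b) \<in> \<alpha> \<and> (a, d) \<in> \<alpha> \<and> ((a, b), (a, d)) \<in> Delta ar A \<alpha> \<beta>)
      \<longleftrightarrow> (b, d) \<in> comm ar A \<beta> \<alpha>"
    if "has_weak_diff_term TYPE('a) ar \<Sigma>" "abelian ar A \<alpha>" "b \<in> car A" for b d
    using ex_maltsev_pair[OF AV that(1,2)]
    by (elim exE) (rule maltsev_pair.ex_Delta_fst_eq_iff_comm[OF _ that(3)])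
  have part3: "Delta ar A \<alpha> \<alpha> = Delta ar A \<alpha> \<gamma> \<inter> alpha_hat \<alpha>"
    if "has_weak_diff_term TYPE('a) ar \<Sigma>" "abelian ar A \<alpha>"
      "congruence ar A \<gamma>" "\<alpha> \<subseteq> \<gamma>" "\<gamma> \<subseteq> centralizer ar A \<alpha>" for \<gamma>
    using cong_pair.ex_maltsev_pair[OF pair[OF that(3)] AV that(1,2)]
    by (elim exE) (rule maltsev_pair.Delta_\<alpha>_\<alpha>_eq_Int_alpha_hat[OF _ that(4,5)])
  show ?thesis
    unfolding Let_def
    apply (intro conjI)
    subgoal using part1 by blast
    subgoal by (simp add: part2)
    subgoal using part3 by blast
    subgoal
      by (intro allI impI, elim conjE)
        (rule maltsev_pair.Delta_iff_diff_term[OF maltsev_pair_if_diff_term[OF diff] diff])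
    done
qed

end
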